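(* Let $G$ be a strictly pseudo-solvable group such that $3\text-5$ is an edge of $\overline\Gamma(G)$. Then (in a chief series of) $G$ there is exactly one non-solvable chief factor, and it is isomorphic to $A_5$.
   Context: For a finite group $G$, the prime graph $\Gamma(G)$ has vertex set the prime divisors of $|G|$, with distinct primes $p,q$ adjacent iff $G$ has an element of order $pq$; $\overline\Gamma(G)$ is its complement graph. A finite group is pseudo-solvable if each composition factor is cyclic or isomorphic to $A_5$; strictly pseudo-solvable means pseudo-solvable and not solvable. *)

theory Defs
  imports "HOL-Algebra.Algebra" "HOL-Algebra.Sym_Groups" "HOL-Algebra.Solvable_Groups"
          "HOL-Algebra.Elementary_Groups" "HOL-Algebra.Multiplicative_Group"
          "HOL-Algebra.SimpleGroups"
begin

definition series_factor :: "('a, 'b) monoid_scheme \<Rightarrow> 'a set list \<Rightarrow> nat \<Rightarrow> 'a set monoid"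
  where "series_factor G Hs i = (G\<lparr>carrier := Hs ! Suc i\<rparr>) Mod (Hs ! i)"

definition composition_series :: "('a, 'b) monoid_scheme \<Rightarrow> 'a set list \<Rightarrow> bool"
  where "composition_series G Hs \<longleftrightarrow>
     Hs \<noteq> [] \<and> hd Hs = {\<one>\<^bsub>G\<^esub>} \<and> last Hs = carrier G \<and>
     (\<forall>i < length Hs. subgroup (Hs ! i) G) \<and>
     (\<forall>i. Suc i < length Hs \<longrightarrow>
          Hs ! i \<lhd> G\<lparr>carrier := Hs ! Suc i\<rparr> \<and> simple_group (series_factor G Hs i))"

definition pseudo_solvable :: "('a, 'b) monoid_scheme \<Rightarrow> bool"
  where "pseudo_solvable G \<longleftrightarrow>
     (\<forall>Hs. composition_series G Hs \<longrightarrow>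
        (\<forall>i. Suc i < length Hs \<longrightarrow>
           cyclic_group (series_factor G Hs i) \<or> series_factor G Hs i \<cong> alt_group 5))"

definition strictly_pseudo_solvable :: "('a, 'b) monoid_scheme \<Rightarrow> bool"
  where "strictly_pseudo_solvable G \<longleftrightarrow> pseudo_solvable G \<and> \<not> solvable G"

definition prime_graph_edge :: "('a, 'b) monoid_scheme \<Rightarrow> nat \<Rightarrow> nat \<Rightarrow> bool"
  where "prime_graph_edge G p q \<longleftrightarrow>
     Factorial_Ring.prime p \<and> Factorial_Ring.prime q \<and> p dvd order G \<and> q dvd order G \<and> p \<noteq> q \<and>
     (\<exists>x \<in> carrier G. group.ord G x = p * q)"

definition compl_prime_graph_edge :: "('a, 'b) monoid_scheme \<Rightarrow> nat \<Rightarrow> nat \<Rightarrow> bool"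
  where "compl_prime_graph_edge G p q \<longleftrightarrow>
     Factorial_Ring.prime p \<and> Factorial_Ring.prime q \<and> p dvd order G \<and> q dvd order G \<and> p \<noteq> q \<and>
     \<not> prime_graph_edge G p q"

definition chief_series :: "('a, 'b) monoid_scheme \<Rightarrow> 'a set list \<Rightarrow> bool"
  where "chief_series G Ns \<longleftrightarrow>
     Ns \<noteq> [] \<and> hd Ns = {\<one>\<^bsub>G\<^esub>} \<and> last Ns = carrier G \<and>
     (\<forall>i < length Ns. Ns ! i \<lhd> G) \<and>
     (\<forall>i. Suc i < length Ns \<longrightarrow>
        Ns ! i \<subset> Ns ! Suc i \<and>
        \<not> (\<exists>M. M \<lhd> G \<and> Ns ! i \<subset> M \<and> M \<subset> Ns ! Suc i))"

end

theory Submission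
  imports Defs
begin

text \<open>
  The hypothesis means that G has no element of order 15. A non-solvable chief factor N/M
  is then isomorphic to A5: for K maximal among the normal subgroups of N containing M, N/K
  is simple, hence cyclic or A5 by pseudo-solvability. It is not cyclic, since otherwise all
  commutators of N lie in the normal core of K, which is M. If K were not normal in G, some
  conjugate K' of K would satisfy N = K K', and elements of order 3 modulo K and of order 5
  modulo K' would lift to a common element of order divisible by 15. So K = M.

  Two such factors A/B below C/D cannot coexist. Let Z be the centralizer of A/B in G. If
  C \<inter> Z is not contained in D, then C = (C \<inter> Z) D, and an element of order 3 in A/B
  (which lies outside Z) lifts together with one of order 5 in C/D. Otherwise the product
  formula inside D gives 60 |C \<inter> Z| \<le> |D|, while |G : Z| \<le> 59 * 59 because an element of G
  is determined modulo Z by its action on two elements of orders 3 and 5, which generate A/B;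
  this contradicts |C| = 60 |D| via |C| |Z| \<le> |G| |C \<inter> Z|.
\<close>

section \<open>Cosets and quotients of subgroups\<close>

context group begin

lemma mult_inv_cancel_left [simp]:
  "x \<in> carrier G \<Longrightarrow> y \<in> carrier G \<Longrightarrow> x \<otimes> (inv x \<otimes> y) = y"
  by (simp flip: m_assoc)

lemma inv_mult_cancel_left [simp]:
  "x \<in> carrier G \<Longrightarrow> y \<in> carrier G \<Longrightarrow> inv x \<otimes> (x \<otimes> y) = y"
  by (simp flip: m_assoc)

lemma ord_consistent:
  assumes "subgroup H G"
  shows "group.ord (G\<lparr>carrier := H\<rparr>) x = ord x"
  by (simp add: group.ord_def[OF subgroup_imp_group[OF assms]] ord_def flip: nat_pow_consistent)

lemma normal_in_subgroup_iff:
  assumes L: "subgroup L G"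
  shows "K \<lhd> G\<lparr>carrier := L\<rparr> \<longleftrightarrow>
    subgroup K G \<and> K \<subseteq> L \<and> (\<forall>x\<in>L. \<forall>h\<in>K. x \<otimes> h \<otimes> inv x \<in> K)"
proof -
  interpret L: group "G\<lparr>carrier := L\<rparr>" by (rule subgroup_imp_group[OF L])
  have "K \<lhd> G\<lparr>carrier := L\<rparr> \<longleftrightarrow> subgroup K (G\<lparr>carrier := L\<rparr>) \<and>
      (\<forall>x\<in>L. \<forall>h\<in>K. x \<otimes> h \<otimes> inv\<^bsub>G\<lparr>carrier := L\<rparr>\<^esub> x \<in> K)"
    using L.normal_inv_iff by simp
  also have "\<dots> \<longleftrightarrow> subgroup K G \<and> K \<subseteq> L \<and> (\<forall>x\<in>L. \<forall>h\<in>K. x \<otimes> h \<otimes> inv x \<in> K)"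
    using incl_subgroup[OF L] subgroup_incl[OF _ L] m_inv_consistent[OF L]
      subgroup.subset[of K "G\<lparr>carrier := L\<rparr>"] by auto
  finally show ?thesis .
qed

lemma normal_in_subgroupD:
  assumes "subgroup L G" "K \<lhd> G\<lparr>carrier := L\<rparr>"
  shows "subgroup K G" "K \<subseteq> L" "\<And>x h. x \<in> L \<Longrightarrow> h \<in> K \<Longrightarrow> x \<otimes> h \<otimes> inv x \<in> K"
  using assms normal_in_subgroup_iff by auto

lemma rcos_eq_iff:
  assumes K: "subgroup K G" and a: "a \<in> carrier G" and b: "b \<in> carrier G"
  shows "K #> a = K #> b \<longleftrightarrow> a \<otimes> inv b \<in> K"
  using subgroup.rcos_module[OF K is_group b a] rcos_self[OF a K] repr_independence[OF _ b K] by blast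

lemma rcos_eq_self_iff:
  assumes K: "subgroup K G" and a: "a \<in> carrier G"
  shows "K #> a = K \<longleftrightarrow> a \<in> K"
  using rcos_eq_iff[OF K a one_closed] coset_mult_one[OF subgroup.subset[OF K]] a by simp

lemma FactGroup_sub_mult:
  assumes "subgroup L G" "K \<lhd> G\<lparr>carrier := L\<rparr>" "a \<in> L" "b \<in> L"
  shows "(K #> a) \<otimes>\<^bsub>G\<lparr>carrier := L\<rparr> Mod K\<^esub> (K #> b) = K #> (a \<otimes> b)"
  using normal.rcos_sum[OF assms(2), of a b] assms(3,4) by simp

lemma FactGroup_sub_pow:
  assumes "subgroup L G" "K \<lhd> G\<lparr>carrier := L\<rparr>" "a \<in> L"
  shows "(K #> a) [^]\<^bsub>G\<lparr>carrier := L\<rparr> Mod K\<^esub> (n::nat) = K #> (a [^] n)"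
  using normal.FactGroup_pow[OF assms(2), of a n] assms(3) by (simp flip: nat_pow_consistent)

lemma rcos_eq_imp_pow_mem_iff:
  assumes K: "K \<lhd> G" and x: "x \<in> carrier G" and y: "y \<in> carrier G" and xy: "K #> x = K #> y"
  shows "x [^] (n::nat) \<in> K \<longleftrightarrow> y [^] n \<in> K"
proof -
  have "K #> (x [^] n) = K #> (y [^] n)"
    using normal.FactGroup_pow[OF K x, of n] normal.FactGroup_pow[OF K y, of n] xy by simp
  then show ?thesis using rcos_eq_self_iff[OF normal_imp_subgroup[OF K]] x y by (metis nat_pow_closed)
qed

lemma order_FactGroup_sub:
  assumes L: "subgroup L G" and K: "K \<lhd> G\<lparr>carrier := L\<rparr>"
  shows "order (G\<lparr>carrier := L\<rparr> Mod K) * card K = card L"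
proof -
  interpret L: group "G\<lparr>carrier := L\<rparr>" by (rule subgroup_imp_group[OF L])
  show ?thesis
    using L.lagrange[OF normal_imp_subgroup[OF K]] by (simp add: order_def FactGroup_def)
qed

lemma FactGroup_sub_commute_iff:
  assumes L: "subgroup L G" and K: "K \<lhd> G\<lparr>carrier := L\<rparr>" and a: "a \<in> L" and b: "b \<in> L"
  shows "(K #> a) \<otimes>\<^bsub>G\<lparr>carrier := L\<rparr> Mod K\<^esub> (K #> b) = (K #> b) \<otimes>\<^bsub>G\<lparr>carrier := L\<rparr> Mod K\<^esub> (K #> a)
    \<longleftrightarrow> a \<otimes> b \<otimes> inv a \<otimes> inv b \<in> K"
proof -
  have aG: "a \<in> carrier G" and bG: "b \<in> carrier G" using a b subgroup.mem_carrier[OF L] by auto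
  have "(a \<otimes> b) \<otimes> inv (b \<otimes> a) = a \<otimes> b \<otimes> inv a \<otimes> inv b"
    using aG bG by (simp add: inv_mult_group m_assoc)
  then show ?thesis
    using FactGroup_sub_mult[OF L K a b] FactGroup_sub_mult[OF L K b a]
      rcos_eq_iff[OF normal_in_subgroupD(1)[OF L K]] aG bG by simp
qed

lemma comm_FactGroup_sub_iff:
  assumes L: "subgroup L G" and K: "K \<lhd> G\<lparr>carrier := L\<rparr>"
  shows "comm_group (G\<lparr>carrier := L\<rparr> Mod K) \<longleftrightarrow> (\<forall>a\<in>L. \<forall>b\<in>L. a \<otimes> b \<otimes> inv a \<otimes> inv b \<in> K)"
proof -
  interpret Q: group "G\<lparr>carrier := L\<rparr> Mod K" by (rule normal.factorgroup_is_group[OF K])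
  have Q: "carrier (G\<lparr>carrier := L\<rparr> Mod K) = (\<lambda>a. K #> a) ` L"
    by (simp add: carrier_FactGroup)
  show ?thesis
  proof
    assume "comm_group (G\<lparr>carrier := L\<rparr> Mod K)"
    then show "\<forall>a\<in>L. \<forall>b\<in>L. a \<otimes> b \<otimes> inv a \<otimes> inv b \<in> K"
      using comm_groupE(4) FactGroup_sub_commute_iff[OF L K] Q by (metis imageI)
  next
    assume "\<forall>a\<in>L. \<forall>b\<in>L. a \<otimes> b \<otimes> inv a \<otimes> inv b \<in> K"
    then show "comm_group (G\<lparr>carrier := L\<rparr> Mod K)"
      using FactGroup_sub_commute_iff[OF L K] Q by (intro Q.group_comm_groupI) auto
  qed
qed

lemma rcos_eq_mult_right:
  assumes "B \<subseteq> carrier G" "u \<in> carrier G" "v \<in> carrier G" "w \<in> carrier G" "B #> u = B #> v"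
  shows "B #> (u \<otimes> w) = B #> (v \<otimes> w)"
  using assms by (metis coset_mult_assoc)

lemma rcos_eq_mult_left:
  assumes B: "B \<lhd> G" and u: "u \<in> carrier G" and v: "v \<in> carrier G" and w: "w \<in> carrier G"
    and uv: "B #> u = B #> v"
  shows "B #> (w \<otimes> u) = B #> (w \<otimes> v)"
proof -
  have sB: "subgroup B G" using normal_imp_subgroup[OF B] .
  have "w \<otimes> (u \<otimes> inv v) \<otimes> inv w \<in> B"
    using normal.inv_op_closed2[OF B w] rcos_eq_iff[OF sB u v] uv by blast
  then have "(w \<otimes> u) \<otimes> inv (w \<otimes> v) \<in> B" using u v w by (simp add: m_assoc inv_mult_group)
  then show ?thesis using rcos_eq_iff[OF sB] u v w by simp
qed

lemma rcos_eq_conj: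
  assumes B: "B \<lhd> G" and u: "u \<in> carrier G" and v: "v \<in> carrier G" and g: "g \<in> carrier G"
    and uv: "B #> u = B #> v"
  shows "B #> (g \<otimes> u \<otimes> inv g) = B #> (g \<otimes> v \<otimes> inv g)"
  using rcos_eq_mult_right[OF subgroup.subset[OF normal_imp_subgroup[OF B]] _ _ inv_closed[OF g]]
    rcos_eq_mult_left[OF B u v g uv] u v g by simp

end

section \<open>Orders of elements modulo a subgroup\<close>

context group begin

lemma prime_dvd_if_pow_mem:
  assumes K: "subgroup K G" and x: "x \<in> carrier G" and p: "Factorial_Ring.prime p"
    and xp: "x [^] p \<in> K" and xK: "x \<notin> K" and xn: "x [^] (n::nat) \<in> K"
  shows "p dvd n"
proof (rule ccontr)
  assume "\<not> p dvd n"
  then have "coprime p n" by (rule prime_imp_coprime[OF p])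
  then have "gcd (int p) (int n) = 1" by (metis coprime_iff_gcd_eq_1 gcd_int_int_eq of_nat_1)
  then obtain u v :: int where uv: "u * int p + v * int n = 1"
    using bezout_int[of "int p" "int n"] by auto
  have "x = x [^] (1::int)" using x by (simp add: int_pow_1)
  also have "\<dots> = x [^] (int p * u + int n * v)" using uv by (simp add: mult.commute)
  also have "\<dots> = x [^] (int p * u) \<otimes> x [^] (int n * v)" using int_pow_mult[OF x] by blast
  also have "\<dots> = (x [^] int p) [^] u \<otimes> (x [^] int n) [^] v" using int_pow_pow[OF x] by simp
  also have "\<dots> = (x [^] p) [^] u \<otimes> (x [^] n) [^] v" by (simp add: int_pow_int)
  finally have "x \<in> K"
    using subgroup_int_pow_closed[OF K xp] subgroup_int_pow_closed[OF K xn] subgroup.m_closed[OF K]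
    by metis
  with xK show False ..
qed

lemma prime_dvd_ord_if_pow_mem:
  assumes "subgroup K G" "x \<in> carrier G" "Factorial_Ring.prime p" "x [^] p \<in> K" "x \<notin> K"
  shows "p dvd ord x"
  using prime_dvd_if_pow_mem[OF assms] assms(2) subgroup.one_closed[OF assms(1)] by simp

lemma exists_ord_eq_if_dvd_ord:
  assumes fin: "finite (carrier G)" and x: "x \<in> carrier G" and d: "d dvd ord x"
  shows "\<exists>y\<in>carrier G. ord y = d"
proof -
  obtain k where k: "ord x = d * k" using d by blast
  moreover have "ord x > 0" using ord_ge_1[OF fin x] by simp
  ultimately have "k dvd ord x" "k \<noteq> 0" "ord x div k = d" by auto
  then have "ord (x [^] k) = d" using ord_pow[OF x] by simp
  then show ?thesis using x by blast
qed

lemma exists_pow_prime_mem_if_dvd_order_FactGroup: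
  assumes fin: "finite (carrier G)" and L: "subgroup L G" and K: "K \<lhd> G\<lparr>carrier := L\<rparr>"
    and p: "Factorial_Ring.prime p" and dvd: "p dvd order (G\<lparr>carrier := L\<rparr> Mod K)"
  shows "\<exists>a\<in>L. a [^] p \<in> K \<and> a \<notin> K"
proof -
  let ?Q = "G\<lparr>carrier := L\<rparr> Mod K"
  interpret Q: group ?Q by (rule normal.factorgroup_is_group[OF K])
  have finQ: "finite (carrier ?Q)"
    using finite_subset[OF subgroup.subset[OF L] fin] by (simp add: carrier_FactGroup)
  obtain m where "order ?Q = p ^ 1 * m" using dvd by auto
  from sylow_thm[OF p Q.is_group this finQ]
  obtain P where P: "subgroup P ?Q" "card P = p" by auto
  have "P \<noteq> {\<one>\<^bsub>?Q\<^esub>}" using P(2) prime_gt_1_nat[OF p] by auto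
  then obtain u where u: "u \<in> P" "u \<noteq> \<one>\<^bsub>?Q\<^esub>" using subgroup.one_closed[OF P(1)] by blast
  interpret P: group "?Q\<lparr>carrier := P\<rparr>" by (rule Q.subgroup_imp_group[OF P(1)])
  have "u [^]\<^bsub>?Q\<^esub> p = \<one>\<^bsub>?Q\<^esub>"
    using P.pow_order_eq_1 u(1) P(2) by (simp add: order_def flip: Q.nat_pow_consistent)
  moreover obtain a where a: "a \<in> L" "u = K #> a"
    using u(1) subgroup.subset[OF P(1)] by (auto simp: carrier_FactGroup)
  ultimately have "K #> (a [^] p) = K" "K #> a \<noteq> K"
    using FactGroup_sub_pow[OF L K a(1)] u(2) by auto
  then show ?thesis
    using a(1) rcos_eq_self_iff[OF normal_in_subgroupD(1)[OF L K]] subgroup.mem_carrier[OF L]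
    by (metis nat_pow_closed)
qed

lemma prime_dvd_order_FactGroup_if_pow_mem:
  assumes L: "subgroup L G" and K: "K \<lhd> G\<lparr>carrier := L\<rparr>" and p: "Factorial_Ring.prime p"
    and a: "a \<in> L" "a [^] p \<in> K" "a \<notin> K"
  shows "p dvd order (G\<lparr>carrier := L\<rparr> Mod K)"
proof -
  let ?Q = "G\<lparr>carrier := L\<rparr> Mod K"
  interpret Q: group ?Q by (rule normal.factorgroup_is_group[OF K])
  have sK: "subgroup K G" using normal_in_subgroupD(1)[OF L K] .
  have aG: "a \<in> carrier G" using a(1) subgroup.mem_carrier[OF L] by blast
  have u: "K #> a \<in> carrier ?Q" using a(1) by (simp add: carrier_FactGroup)
  have "(K #> a) [^]\<^bsub>?Q\<^esub> p = \<one>\<^bsub>?Q\<^esub>"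
    using FactGroup_sub_pow[OF L K a(1)] rcos_eq_self_iff[OF sK] aG a(2) by simp
  then have "Q.ord (K #> a) dvd p" using Q.pow_eq_id[OF u] by simp
  moreover have "Q.ord (K #> a) \<noteq> 1"
    using Q.ord_eq_1[OF u] rcos_eq_self_iff[OF sK aG] a(3) by simp
  ultimately have "Q.ord (K #> a) = p" using p prime_nat_iff by blast
  then show ?thesis using Q.ord_dvd_group_order[OF u] by simp
qed




lemma normal_product_exists_rcos_eq:
  assumes K: "K \<lhd> G" and K': "K' \<lhd> G" and prod: "K <#> K' = carrier G"
    and a: "a \<in> carrier G" and b: "b \<in> carrier G"
  shows "\<exists>x\<in>carrier G. K #> x = K #> a \<and> K' #> x = K' #> b"
proof -
  have sK: "subgroup K G" and sK': "subgroup K' G" using K K' normal_imp_subgroup by auto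
  have prod': "K' <#> K = carrier G" using prod commut_normal[OF sK' K] by simp
  obtain k a' where ka': "k \<in> K" "a' \<in> K'" "a = k \<otimes> a'"
    using a prod unfolding set_mult_def by blast
  obtain k' b' where kb': "k' \<in> K'" "b' \<in> K" "b = k' \<otimes> b'"
    using b prod' unfolding set_mult_def by blast
  have G: "k \<in> carrier G" "a' \<in> carrier G" "k' \<in> carrier G" "b' \<in> carrier G"
    using ka'(1,2) kb'(1,2) subgroup.mem_carrier[OF sK] subgroup.mem_carrier[OF sK'] by auto
  define x where "x = a' \<otimes> b'"
  have "x \<otimes> inv a = (a' \<otimes> b' \<otimes> inv a') \<otimes> inv k"
    unfolding x_def ka'(3) using G by (simp add: m_assoc inv_mult_group)
  moreover have "a' \<otimes> b' \<otimes> inv a' \<in> K" using normal.inv_op_closed2[OF K G(2) kb'(2)] .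
  ultimately have "x \<otimes> inv a \<in> K"
    using ka'(1) subgroup.m_closed[OF sK] subgroup.m_inv_closed[OF sK] by simp
  moreover have "x \<otimes> inv b = a' \<otimes> inv k'"
    unfolding x_def kb'(3) using G by (simp add: m_assoc inv_mult_group)
  then have "x \<otimes> inv b \<in> K'"
    using ka'(2) kb'(1) subgroup.m_closed[OF sK'] subgroup.m_inv_closed[OF sK'] by simp
  ultimately show ?thesis
    unfolding x_def using G a b rcos_eq_iff[OF sK] rcos_eq_iff[OF sK'] by auto
qed

lemma exists_ord_mult_if_normal_product:
  assumes fin: "finite (carrier G)" and K: "K \<lhd> G" and K': "K' \<lhd> G"
    and prod: "K <#> K' = carrier G"
    and p: "Factorial_Ring.prime p" and q: "Factorial_Ring.prime q" and pq: "p \<noteq> q"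
    and a: "a \<in> carrier G" "a [^] p \<in> K" "a \<notin> K"
    and b: "b \<in> carrier G" "b [^] q \<in> K'" "b \<notin> K'"
  shows "\<exists>y\<in>carrier G. ord y = p * q"
proof -
  have sK: "subgroup K G" and sK': "subgroup K' G" using K K' normal_imp_subgroup by auto
  obtain x where x: "x \<in> carrier G" "K #> x = K #> a" "K' #> x = K' #> b"
    using normal_product_exists_rcos_eq[OF K K' prod a(1) b(1)] by blast
  have "x [^] p \<in> K" "x \<notin> K"
    using rcos_eq_imp_pow_mem_iff[OF K x(1) a(1) x(2)] rcos_eq_self_iff[OF sK x(1)]
      rcos_eq_self_iff[OF sK a(1)] x(2) a by auto
  then have "p dvd ord x" by (rule prime_dvd_ord_if_pow_mem[OF sK x(1) p])
  moreover have "x [^] q \<in> K'" "x \<notin> K'"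
    using rcos_eq_imp_pow_mem_iff[OF K' x(1) b(1) x(3)] rcos_eq_self_iff[OF sK' x(1)]
      rcos_eq_self_iff[OF sK' b(1)] x(3) b by auto
  then have "q dvd ord x" by (rule prime_dvd_ord_if_pow_mem[OF sK' x(1) q])
  ultimately have "p * q dvd ord x"
    using divides_mult primes_coprime[OF p q pq] by blast
  then show ?thesis using exists_ord_eq_if_dvd_ord[OF fin x(1)] by blast
qed

end

section \<open>Normal cores and indices\<close>

context group begin

definition normal_core :: "'a set \<Rightarrow> 'a set"
  where "normal_core H = {x \<in> H. \<forall>g\<in>carrier G. g \<otimes> x \<otimes> inv g \<in> H}"

lemma normal_core_subset: "normal_core H \<subseteq> H"
  unfolding normal_core_def by blast

lemma normal_core_normal:
  assumes H: "subgroup H G"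
  shows "normal_core H \<lhd> G"
proof -
  have G: "x \<in> carrier G" if "x \<in> normal_core H" for x
    using that normal_core_subset subgroup.subset[OF H] by blast
  have "subgroup (normal_core H) G"
  proof (rule subgroupI)
    show "normal_core H \<subseteq> carrier G" using G by blast
    have "\<one> \<in> normal_core H"
      using subgroup.one_closed[OF H] unfolding normal_core_def by simp
    then show "normal_core H \<noteq> {}" by blast
    show "inv a \<in> normal_core H" if a: "a \<in> normal_core H" for a
    proof -
      have "g \<otimes> inv a \<otimes> inv g \<in> H" if g: "g \<in> carrier G" for g
      proof -
        have "inv (g \<otimes> a \<otimes> inv g) \<in> H"
          using a g subgroup.m_inv_closed[OF H] unfolding normal_core_def by blast
        then show ?thesis using g G[OF a] by (simp add: inv_mult_group m_assoc)
      qed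
      then show ?thesis using a subgroup.m_inv_closed[OF H] unfolding normal_core_def by blast
    qed
    show "a \<otimes> b \<in> normal_core H" if a: "a \<in> normal_core H" and b: "b \<in> normal_core H" for a b
    proof -
      have "g \<otimes> (a \<otimes> b) \<otimes> inv g \<in> H" if g: "g \<in> carrier G" for g
      proof -
        have "(g \<otimes> a \<otimes> inv g) \<otimes> (g \<otimes> b \<otimes> inv g) \<in> H"
          using a b g subgroup.m_closed[OF H] unfolding normal_core_def by blast
        then show ?thesis using g G[OF a] G[OF b] by (simp add: m_assoc)
      qed
      then show ?thesis using a b subgroup.m_closed[OF H] unfolding normal_core_def by blast
    qed
  qed
  moreover have "h \<otimes> x \<otimes> inv h \<in> normal_core H" if h: "h \<in> carrier G" and x: "x \<in> normal_core H" for h x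
  proof -
    have conj: "g \<otimes> (h \<otimes> x \<otimes> inv h) \<otimes> inv g \<in> H" if g: "g \<in> carrier G" for g
    proof -
      have "(g \<otimes> h) \<otimes> x \<otimes> inv (g \<otimes> h) \<in> H" using x g h unfolding normal_core_def by blast
      then show ?thesis using g h G[OF x] by (simp add: m_assoc inv_mult_group)
    qed
    moreover have "h \<otimes> x \<otimes> inv h \<in> H" using conj[of \<one>] h G[OF x] by simp
    ultimately show ?thesis unfolding normal_core_def by blast
  qed
  ultimately show ?thesis by (rule normal_invI)
qed

lemma normal_subset_normal_core:
  assumes "N \<lhd> G" "N \<subseteq> H"
  shows "N \<subseteq> normal_core H"
  using assms normal.inv_op_closed2[OF assms(1)] unfolding normal_core_def by blast

lemma card_rcosets_le_card_image:
  assumes fin: "finite (carrier G)" and H: "subgroup H G"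
    and fibres: "\<And>g g'. g \<in> carrier G \<Longrightarrow> g' \<in> carrier G \<Longrightarrow> \<phi> g = \<phi> g' \<Longrightarrow> g \<otimes> inv g' \<in> H"
  shows "card (rcosets H) \<le> card (\<phi> ` carrier G)"
proof -
  define r where "r v = H #> (SOME g. g \<in> carrier G \<and> \<phi> g = v)" for v
  have "H #> g = r (\<phi> g)" if g: "g \<in> carrier G" for g
  proof -
    have "\<exists>g'. g' \<in> carrier G \<and> \<phi> g' = \<phi> g" using g by blast
    then have g': "(SOME g'. g' \<in> carrier G \<and> \<phi> g' = \<phi> g) \<in> carrier G \<and>
        \<phi> (SOME g'. g' \<in> carrier G \<and> \<phi> g' = \<phi> g) = \<phi> g"
      by (rule someI_ex)
    then have "g \<otimes> inv (SOME g'. g' \<in> carrier G \<and> \<phi> g' = \<phi> g) \<in> H"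
      using fibres[OF g] by metis
    then show ?thesis unfolding r_def using rcos_eq_iff[OF H g] g' by blast
  qed
  then have "rcosets H = r ` \<phi> ` carrier G" unfolding RCOSETS_def by auto
  then show ?thesis using fin by (simp add: card_image_le)
qed
lemma rcosets_mult_permutes:
  assumes H: "subgroup H G" and x: "x \<in> carrier G"
  shows "(\<lambda>S. if S \<in> rcosets H then S #> x else S) permutes rcosets H"
    (is "?\<sigma> permutes ?R")
proof (rule bij_imp_permutes)
  have HG: "H \<subseteq> carrier G" using subgroup.subset[OF H] .
  have \<sigma>: "?\<sigma> (H #> y) = H #> (y \<otimes> x)" if y: "y \<in> carrier G" for y
    using rcosetsI[OF HG y] coset_mult_assoc[OF HG y x] by simp
  have "?\<sigma> ` ?R = ?R"
  proof
    show "?\<sigma> ` ?R \<subseteq> ?R"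
    proof
      fix T assume "T \<in> ?\<sigma> ` ?R"
      then obtain y where "y \<in> carrier G" "T = ?\<sigma> (H #> y)" unfolding RCOSETS_def by blast
      then show "T \<in> ?R" using \<sigma> x rcosetsI[OF HG] by simp
    qed
    show "?R \<subseteq> ?\<sigma> ` ?R"
    proof
      fix T assume "T \<in> ?R"
      then obtain y where y: "y \<in> carrier G" "T = H #> y" unfolding RCOSETS_def by blast
      have "H #> (y \<otimes> inv x) \<in> ?R" using rcosetsI[OF HG] x y(1) by simp
      moreover have "T = ?\<sigma> (H #> (y \<otimes> inv x))" using \<sigma> x y by (simp add: m_assoc)
      ultimately show "T \<in> ?\<sigma> ` ?R" by (rule rev_image_eqI)
    qed
  qed
  moreover have "inj_on ?\<sigma> ?R"
  proof (rule inj_onI)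
    fix S S' assume S: "S \<in> ?R" and S': "S' \<in> ?R" and e: "?\<sigma> S = ?\<sigma> S'"
    obtain y where y: "y \<in> carrier G" "S = H #> y" using S unfolding RCOSETS_def by blast
    obtain y' where y': "y' \<in> carrier G" "S' = H #> y'" using S' unfolding RCOSETS_def by blast
    have "S #> x = S' #> x" using e S S' by simp
    then have "H #> (y \<otimes> x) = H #> (y' \<otimes> x)" using y y' coset_mult_assoc[OF HG] x by simp
    then have "(y \<otimes> x) \<otimes> inv (y' \<otimes> x) \<in> H" using rcos_eq_iff[OF H] x y y' by simp
    then have "y \<otimes> inv y' \<in> H" using x y y' by (simp add: m_assoc inv_mult_group)
    then show "S = S'" using rcos_eq_iff[OF H y(1) y'(1)] y y' by simp
  qed
  ultimately show "bij_betw ?\<sigma> ?R ?R" by (simp add: bij_betw_def)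
qed (simp)

text \<open>The action of G on the right cosets of H has kernel the normal core of H.\<close>

lemma card_rcosets_normal_core_le:
  assumes fin: "finite (carrier G)" and H: "subgroup H G"
  shows "card (rcosets (normal_core H)) \<le> fact (card (rcosets H))"
proof -
  let ?R = "rcosets H"
  define \<sigma> where "\<sigma> x S = (if S \<in> ?R then S #> x else S)" for x S
  have HG: "H \<subseteq> carrier G" using subgroup.subset[OF H] .
  have finR: "finite ?R" using fin by (simp add: RCOSETS_def)
  have "g \<otimes> inv g' \<in> normal_core H"
    if g: "g \<in> carrier G" and g': "g' \<in> carrier G" and e: "\<sigma> g = \<sigma> g'" for g g'
  proof -
    have conj: "y \<otimes> (g \<otimes> inv g') \<otimes> inv y \<in> H" if y: "y \<in> carrier G" for y
    proof -
      have "H #> y #> g = H #> y #> g'" using e rcosetsI[OF HG y] unfolding \<sigma>_def by metis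
      then have "H #> (y \<otimes> g) = H #> (y \<otimes> g')" using coset_mult_assoc[OF HG] y g g' by simp
      then have "(y \<otimes> g) \<otimes> inv (y \<otimes> g') \<in> H" using rcos_eq_iff[OF H] g g' y by simp
      then show ?thesis using g g' y by (simp add: m_assoc inv_mult_group)
    qed
    moreover have "g \<otimes> inv g' \<in> H" using conj[of \<one>] g g' by simp
    ultimately show ?thesis unfolding normal_core_def by blast
  qed
  then have "card (rcosets (normal_core H)) \<le> card (\<sigma> ` carrier G)"
    by (rule card_rcosets_le_card_image[OF fin normal_imp_subgroup[OF normal_core_normal[OF H]]])
  also have "\<dots> \<le> card {p. p permutes ?R}"
    using rcosets_mult_permutes[OF H] unfolding \<sigma>_def
    by (intro card_mono[OF finite_permutations[OF finR]]) blast
  also have "\<dots> = fact (card ?R)" by (rule card_permutations[OF refl finR])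
  finally show ?thesis .
qed

lemma card_rcosets_maximal_normal_le:
  assumes fin: "finite (carrier G)" and H: "subgroup H G" and HG: "H \<noteq> carrier G"
    and N: "N \<lhd> G" and NH: "N \<subseteq> H"
    and max: "\<And>T. T \<lhd> G \<Longrightarrow> N \<subseteq> T \<Longrightarrow> T = N \<or> T = carrier G"
  shows "card (rcosets N) \<le> fact (card (rcosets H))"
proof -
  have "normal_core H \<noteq> carrier G"
    using normal_core_subset[of H] subgroup.subset[OF H] HG by blast
  then have "normal_core H = N"
    using max[OF normal_core_normal[OF H] normal_subset_normal_core[OF N NH]] by blast
  then show ?thesis using card_rcosets_normal_core_le[OF fin H] by simp
qed

lemma card_mult_le_order_mult_card_Int:
  assumes fin: "finite (carrier G)" and P: "subgroup P G" and Q: "subgroup Q G"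
  shows "card P * card Q \<le> order G * card (P \<inter> Q)"
proof -
  interpret P: group "G\<lparr>carrier := P\<rparr>" by (rule subgroup_imp_group[OF P])
  have PG: "P \<subseteq> carrier G" using subgroup.subset[OF P] .
  have PQ: "subgroup (P \<inter> Q) (G\<lparr>carrier := P\<rparr>)"
    using subgroup_incl[OF subgroups_Inter_pair[OF P Q] P] by blast
  have "x \<otimes> inv\<^bsub>G\<lparr>carrier := P\<rparr>\<^esub> x' \<in> P \<inter> Q"
    if x: "x \<in> P" and x': "x' \<in> P" and e: "Q #> x = Q #> x'" for x x'
  proof -
    have "x \<otimes> inv x' \<in> Q" using e rcos_eq_iff[OF Q] x x' PG by blast
    moreover have "x \<otimes> inv x' \<in> P"
      using subgroup.m_closed[OF P x subgroup.m_inv_closed[OF P x']] .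
    ultimately show ?thesis using m_inv_consistent[OF P x'] by simp
  qed
  then have "card (rcosets\<^bsub>G\<lparr>carrier := P\<rparr>\<^esub> (P \<inter> Q)) \<le> card ((\<lambda>x. Q #> x) ` P)"
    using P.card_rcosets_le_card_image[OF _ PQ, of "\<lambda>x. Q #> x"] finite_subset[OF PG fin] by simp
  also have "\<dots> \<le> card (rcosets Q)"
  proof (rule card_mono)
    show "finite (rcosets Q)" using fin by (simp add: RCOSETS_def)
    show "(\<lambda>x. Q #> x) ` P \<subseteq> rcosets Q" using PG rcosetsI[OF subgroup.subset[OF Q]] by blast
  qed
  finally have "card (rcosets\<^bsub>G\<lparr>carrier := P\<rparr>\<^esub> (P \<inter> Q)) * card (P \<inter> Q) * card Q
      \<le> card (rcosets Q) * card Q * card (P \<inter> Q)"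
    by (simp add: mult.commute mult.left_commute)
  then show ?thesis
    using P.lagrange[OF PQ] lagrange[OF Q] by (simp add: order_def)
qed

end

section \<open>Composition series\<close>

definition composition_chain :: "('a, 'b) monoid_scheme \<Rightarrow> 'a set list \<Rightarrow> bool"
  where "composition_chain G Hs \<longleftrightarrow> Hs \<noteq> [] \<and> (\<forall>i < length Hs. subgroup (Hs ! i) G) \<and>
     (\<forall>i. Suc i < length Hs \<longrightarrow>
          Hs ! i \<lhd> G\<lparr>carrier := Hs ! Suc i\<rparr> \<and> simple_group (series_factor G Hs i))"

lemma composition_chain_singleton: "subgroup L G \<Longrightarrow> composition_chain G [L]"
  unfolding composition_chain_def by auto

lemma composition_chain_append:
  assumes Hs: "composition_chain G Hs" and Ks: "composition_chain G Ks"
    and normal: "last Hs \<lhd> G\<lparr>carrier := hd Ks\<rparr>"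
    and simple: "simple_group (G\<lparr>carrier := hd Ks\<rparr> Mod last Hs)"
  shows "composition_chain G (Hs @ Ks)"
proof -
  have ne: "Hs \<noteq> []" "Ks \<noteq> []" using Hs Ks unfolding composition_chain_def by auto
  have "subgroup ((Hs @ Ks) ! i) G" if "i < length (Hs @ Ks)" for i
    using that Hs Ks unfolding composition_chain_def by (cases "i < length Hs") (auto simp: nth_append)
  moreover have "(Hs @ Ks) ! i \<lhd> G\<lparr>carrier := (Hs @ Ks) ! Suc i\<rparr> \<and>
      simple_group (series_factor G (Hs @ Ks) i)" if i: "Suc i < length (Hs @ Ks)" for i
  proof -
    consider "Suc i < length Hs" | "Suc i = length Hs" | "length Hs \<le> i" by linarith
    then show ?thesis
    proof cases
      case 1
      then show ?thesis using Hs unfolding composition_chain_def series_factor_def by (simp add: nth_append)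
    next
      case 2
      then have "i = length Hs - 1" by simp
      then have "(Hs @ Ks) ! i = last Hs" "(Hs @ Ks) ! Suc i = hd Ks"
        using ne by (auto simp: nth_append last_conv_nth hd_conv_nth)
      then show ?thesis using normal simple unfolding series_factor_def by simp
    next
      case 3
      then have "(Hs @ Ks) ! i = Ks ! (i - length Hs)" "(Hs @ Ks) ! Suc i = Ks ! Suc (i - length Hs)"
        "Suc (i - length Hs) < length Ks"
        using i by (auto simp: nth_append Suc_diff_le)
      then show ?thesis using Ks unfolding composition_chain_def series_factor_def by simp
    qed
  qed
  ultimately show ?thesis using ne unfolding composition_chain_def by simp
qed

lemma composition_chain_imp_composition_series:
  "composition_chain G Hs \<Longrightarrow> hd Hs = {\<one>\<^bsub>G\<^esub>} \<Longrightarrow> last Hs = carrier G \<Longrightarrow> composition_series G Hs"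
  unfolding composition_chain_def composition_series_def by auto

context group begin

lemma exists_maximal_normal_subgroup:
  assumes fin: "finite (carrier G)" and M: "M \<lhd> G" and MG: "M \<noteq> carrier G"
  obtains K where "K \<lhd> G" "M \<subseteq> K" "K \<noteq> carrier G"
    "\<And>T. T \<lhd> G \<Longrightarrow> K \<subseteq> T \<Longrightarrow> T = K \<or> T = carrier G"
proof -
  define S where "S = {T. T \<lhd> G \<and> M \<subseteq> T \<and> T \<noteq> carrier G}"
  have "card T < Suc (order G)" if "T \<in> S" for T
  proof -
    have "T \<subseteq> carrier G" using subgroup.subset[OF normal_imp_subgroup[of T]] that unfolding S_def by blast
    then show ?thesis using card_mono[OF fin] unfolding order_def by (simp add: le_imp_less_Suc)
  qed
  moreover have "M \<in> S" using M MG unfolding S_def by blast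
  ultimately obtain K where K: "K \<in> S" and Kmax: "\<And>T. T \<in> S \<Longrightarrow> card T \<le> card K"
    using ex_has_greatest_nat[of "\<lambda>T. T \<in> S" M card "Suc (order G)"] by blast
  have "T = K \<or> T = carrier G" if T: "T \<lhd> G" and KT: "K \<subseteq> T" for T
  proof (rule ccontr)
    assume "\<not> (T = K \<or> T = carrier G)"
    then have "T \<in> S" "T \<noteq> K" using T KT K unfolding S_def by auto
    moreover have "finite T" using finite_subset[OF subgroup.subset[OF normal_imp_subgroup[OF T]] fin] .
    ultimately show False using Kmax card_seteq[OF _ KT] by blast
  qed
  then show thesis using that K unfolding S_def by blast
qed

lemma maximal_normal_imp_simple_FactGroup:
  assumes fin: "finite (carrier G)" and K: "K \<lhd> G" and KG: "K \<noteq> carrier G"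
    and max: "\<And>T. T \<lhd> G \<Longrightarrow> K \<subseteq> T \<Longrightarrow> T = K \<or> T = carrier G"
  shows "simple_group (G Mod K)"
proof -
  interpret K: normal K G by (rule K)
  interpret Q: group "G Mod K" by (rule K.factorgroup_is_group)
  have sK: "subgroup K G" by (rule K.subgroup_axioms)
  have "order (G Mod K) * card K = order G"
    using lagrange[OF sK] by (simp add: order_def FactGroup_def)
  moreover have "card K < order G"
    using KG subgroup.subset[OF sK] fin unfolding order_def by (simp add: psubset_card_mono psubset_eq)
  ultimately have "order (G Mod K) > 1"
    using mult_le_mono1[of "order (G Mod K)" 1 "card K"] by (cases "order (G Mod K) \<le> 1") auto
  moreover have "A = carrier (G Mod K) \<or> A = {\<one>\<^bsub>G Mod K\<^esub>}" if A: "A \<lhd> G Mod K" for A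
  proof -
    have sA: "subgroup A (G Mod K)" using normal_imp_subgroup[OF A] .
    have char: "\<Union>A = {x \<in> carrier G. K #> x \<in> A}" using K.factgroup_subgroup_union_char[OF sA] .
    have KA: "K \<in> A" using subgroup.one_closed[OF sA] by simp
    then have "K \<subseteq> \<Union>A" by blast
    then consider "\<Union>A = K" | "\<Union>A = carrier G"
      using max[OF K.factgroup_subgroup_union_normal[OF A]] by blast
    then show ?thesis
    proof cases
      case 1
      have "a = K" if a: "a \<in> A" for a
      proof -
        have "a \<in> carrier (G Mod K)" using a subgroup.subset[OF sA] by blast
        then obtain y where y: "y \<in> carrier G" "a = K #> y" unfolding carrier_FactGroup by blast
        have "{x \<in> carrier G. K #> x \<in> A} = K" using trans[OF char[symmetric] 1] .
        then have "y \<in> K" using a y by blast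
        then show ?thesis using y rcos_eq_self_iff[OF sK] by simp
      qed
      then have "A = {K}" using KA by blast
      then show ?thesis by simp
    next
      case 2
      have "{x \<in> carrier G. K #> x \<in> A} = carrier G" using trans[OF char[symmetric] 2] .
      then have "carrier (G Mod K) \<subseteq> A" unfolding carrier_FactGroup by blast
      then show ?thesis using subgroup.subset[OF sA] by blast
    qed
  qed
  ultimately show ?thesis by (intro simple_group.intro simple_group_axioms.intro Q.is_group) auto
qed

lemma exists_composition_chain:
  assumes fin: "finite (carrier G)"
  shows "subgroup L G \<Longrightarrow> H \<lhd> G\<lparr>carrier := L\<rparr> \<Longrightarrow>
    \<exists>Hs. composition_chain G Hs \<and> hd Hs = H \<and> last Hs = L"
proof (induction "card L" arbitrary: L rule: less_induct)
  case less
  note L = less.prems(1) and H = less.prems(2)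
  interpret L: group "G\<lparr>carrier := L\<rparr>" by (rule subgroup_imp_group[OF L])
  have finL: "finite L" using finite_subset[OF subgroup.subset[OF L] fin] .
  show ?case
  proof (cases "H = L")
    case True
    then show ?thesis using composition_chain_singleton[OF L] by fastforce
  next
    case False
    have finL': "finite (carrier (G\<lparr>carrier := L\<rparr>))" and HL: "H \<noteq> carrier (G\<lparr>carrier := L\<rparr>)"
      using finL False by simp_all
    obtain M where M: "M \<lhd> G\<lparr>carrier := L\<rparr>" "H \<subseteq> M" "M \<noteq> carrier (G\<lparr>carrier := L\<rparr>)"
      and max: "\<And>T. T \<lhd> G\<lparr>carrier := L\<rparr> \<Longrightarrow> M \<subseteq> T \<Longrightarrow> T = M \<or> T = carrier (G\<lparr>carrier := L\<rparr>)"
      using L.exists_maximal_normal_subgroup[OF finL' H HL] by blast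
    have simple: "simple_group (G\<lparr>carrier := L\<rparr> Mod M)"
      by (rule L.maximal_normal_imp_simple_FactGroup[OF finL' M(1) M(3) max])
    have sM: "subgroup M G" "M \<subseteq> L" using normal_in_subgroupD[OF L M(1)] by auto
    have "H \<lhd> G\<lparr>carrier := M\<rparr>"
      using normal_in_subgroup_iff[OF sM(1)] normal_in_subgroup_iff[OF L] H M(2) sM(2) by blast
    moreover have "card M < card L" using sM(2) M(3) finL by (simp add: psubset_card_mono psubset_eq)
    ultimately obtain Hs where Hs: "composition_chain G Hs" "hd Hs = H" "last Hs = M"
      using less.hyps[OF _ sM(1)] by blast
    then have "composition_chain G (Hs @ [L])"
      using composition_chain_append[OF Hs(1) composition_chain_singleton[OF L]] M(1) simple by simp
    moreover have "hd (Hs @ [L]) = H" using Hs unfolding composition_chain_def by simp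
    ultimately show ?thesis by fastforce
  qed
qed

lemma pseudo_solvable_simple_section:
  assumes fin: "finite (carrier G)" and ps: "pseudo_solvable G" and N: "N \<lhd> G"
    and K: "K \<lhd> G\<lparr>carrier := N\<rparr>" and simple: "simple_group (G\<lparr>carrier := N\<rparr> Mod K)"
  shows "cyclic_group (G\<lparr>carrier := N\<rparr> Mod K) \<or> G\<lparr>carrier := N\<rparr> Mod K \<cong> alt_group 5"
proof -
  have sN: "subgroup N G" using normal_imp_subgroup[OF N] .
  have sK: "subgroup K G" using normal_in_subgroupD(1)[OF sN K] .
  have "{\<one>} \<lhd> G\<lparr>carrier := K\<rparr>"
    using group.one_is_normal[OF subgroup_imp_group[OF sK]] by simp
  then obtain Hs where Hs: "composition_chain G Hs" "hd Hs = {\<one>}" "last Hs = K"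
    using exists_composition_chain[OF fin sK] by blast
  have "N \<lhd> G\<lparr>carrier := carrier G\<rparr>" using N by simp
  then obtain Ks where Ks: "composition_chain G Ks" "hd Ks = N" "last Ks = carrier G"
    using exists_composition_chain[OF fin subgroup_self] by blast
  have ne: "Hs \<noteq> []" "Ks \<noteq> []" using Hs(1) Ks(1) unfolding composition_chain_def by auto
  have "composition_series G (Hs @ Ks)"
    using composition_chain_append[OF Hs(1) Ks(1)] Hs(2,3) Ks(2,3) K simple ne
    by (intro composition_chain_imp_composition_series) auto
  moreover have "Suc (length Hs - 1) < length (Hs @ Ks)" using ne by simp
  moreover have "series_factor G (Hs @ Ks) (length Hs - 1) = G\<lparr>carrier := N\<rparr> Mod K"
    using ne Hs(3) Ks(2) unfolding series_factor_def
    by (simp add: nth_append last_conv_nth hd_conv_nth)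
  ultimately show ?thesis using ps unfolding pseudo_solvable_def by metis
qed

end

section \<open>Solvability along a chief series\<close>

lemma comm_group_imp_solvable:
  assumes "comm_group H"
  shows "solvable H"
proof -
  have "(derived H ^^ 1) (carrier H) = {\<one>\<^bsub>H\<^esub>}"
    using comm_group.derived_eq_singleton[OF assms] by simp
  then show ?thesis
    using group.solvable_iff_trivial_derived_seq[OF comm_group.axioms(2)[OF assms]] by blast
qed

context group begin

lemma solvable_extension:
  assumes A: "subgroup A G" and B: "subgroup B G" and AB: "A \<lhd> G\<lparr>carrier := B\<rparr>"
    and sA: "solvable (G\<lparr>carrier := A\<rparr>)" and sQ: "solvable (G\<lparr>carrier := B\<rparr> Mod A)"
  shows "solvable (G\<lparr>carrier := B\<rparr>)"
proof -
  have "A \<subseteq> B" using normal_in_subgroupD(2)[OF B AB] .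
  then have incl: "group_hom (G\<lparr>carrier := A\<rparr>) (G\<lparr>carrier := B\<rparr>) id"
    using subgroup_imp_group[OF A] subgroup_imp_group[OF B]
    by (intro group_hom.intro group_hom_axioms.intro) (auto simp: hom_def)
  have proj: "group_hom (G\<lparr>carrier := B\<rparr>) (G\<lparr>carrier := B\<rparr> Mod A) (\<lambda>a. A #> a)"
    using normal.r_coset_hom_Mod[OF AB] subgroup_imp_group[OF B] normal.factorgroup_is_group[OF AB]
    by (intro group_hom.intro group_hom_axioms.intro) auto
  have "kernel (G\<lparr>carrier := B\<rparr>) (G\<lparr>carrier := B\<rparr> Mod A) (\<lambda>a. A #> a) \<subseteq> A"
    using rcos_eq_self_iff[OF normal_in_subgroupD(1)[OF B AB]] subgroup.mem_carrier[OF B]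
    by (auto simp: kernel_def)
  then show ?thesis
    using solvable_condition[OF incl proj _ _ sA sQ] by (simp add: carrier_FactGroup)
qed

lemma chief_seriesD:
  assumes "chief_series G Ns"
  shows chief_series_normal: "\<And>i. i < length Ns \<Longrightarrow> Ns ! i \<lhd> G"
    and chief_series_step: "\<And>i. Suc i < length Ns \<Longrightarrow> Ns ! i \<subset> Ns ! Suc i"
    and chief_series_minimal: "\<And>i T. Suc i < length Ns \<Longrightarrow> T \<lhd> G \<Longrightarrow>
      Ns ! i \<subseteq> T \<Longrightarrow> T \<subseteq> Ns ! Suc i \<Longrightarrow> T = Ns ! i \<or> T = Ns ! Suc i"
    and chief_series_first: "Ns ! 0 = {\<one>}"
    and chief_series_last: "Ns ! (length Ns - 1) = carrier G"
    and chief_series_nonempty: "Ns \<noteq> []"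
proof -
  have ne: "Ns \<noteq> []" and hd: "hd Ns = {\<one>}" and last: "last Ns = carrier G"
    using assms unfolding chief_series_def by blast+
  show "Ns \<noteq> []" by (rule ne)
  show "Ns ! 0 = {\<one>}" using hd ne by (simp add: hd_conv_nth)
  show "Ns ! (length Ns - 1) = carrier G" using last ne by (simp add: last_conv_nth)
  show "\<And>i. i < length Ns \<Longrightarrow> Ns ! i \<lhd> G"
    and "\<And>i. Suc i < length Ns \<Longrightarrow> Ns ! i \<subset> Ns ! Suc i"
    using assms unfolding chief_series_def by blast+
  show "\<And>i T. Suc i < length Ns \<Longrightarrow> T \<lhd> G \<Longrightarrow>
      Ns ! i \<subseteq> T \<Longrightarrow> T \<subseteq> Ns ! Suc i \<Longrightarrow> T = Ns ! i \<or> T = Ns ! Suc i"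
    using assms unfolding chief_series_def by blast
qed

lemma chief_series_mono:
  assumes "chief_series G Ns" "i \<le> j" "j < length Ns"
  shows "Ns ! i \<subseteq> Ns ! j"
  using assms(2,3)
proof (induction j)
  case (Suc j)
  show ?case
  proof (cases "i = Suc j")
    case False
    then have "Ns ! i \<subseteq> Ns ! j" using Suc by simp
    then show ?thesis using chief_series_step[OF assms(1), of j] Suc.prems(2) by blast
  qed simp
qed simp

lemma chief_series_solvable:
  assumes cs: "chief_series G Ns"
    and factors: "\<And>i. Suc i < length Ns \<Longrightarrow> solvable (series_factor G Ns i)"
  shows "solvable G"
proof -
  have "solvable (G\<lparr>carrier := Ns ! i\<rparr>)" if "i < length Ns" for i
    using that
  proof (induction i)
    case 0
    have "solvable_seq (G\<lparr>carrier := {\<one>}\<rparr>) {\<one>\<^bsub>G\<lparr>carrier := {\<one>}\<rparr>\<^esub>}" by (rule solvable_seq.unity)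
    then show ?case using chief_series_first[OF cs] by (simp add: solvable_def)
  next
    case (Suc i)
    have N: "Ns ! i \<lhd> G" "Ns ! Suc i \<lhd> G" using chief_series_normal[OF cs] Suc.prems by auto
    have sN: "subgroup (Ns ! i) G" "subgroup (Ns ! Suc i) G" using N normal_imp_subgroup by auto
    have "Ns ! i \<lhd> G\<lparr>carrier := Ns ! Suc i\<rparr>"
      using normal_restrict_supergroup[OF sN(2) N(1)] chief_series_step[OF cs Suc.prems] by blast
    then show ?case
      using solvable_extension[OF sN] Suc factors[OF Suc.prems] unfolding series_factor_def by simp
  qed
  from this[of "length Ns - 1"] have "solvable (G\<lparr>carrier := carrier G\<rparr>)"
    using chief_series_last[OF cs] chief_series_nonempty[OF cs] by simp
  then show ?thesis by simp
qed

end

section \<open>Non-solvable chief factors\<close>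

lemma order_alt_group_5: "order (alt_group 5) = 60"
proof -
  have "2 * card (carrier (alt_group 5)) = fact 5" by (rule alt_group_card_carrier) simp
  then show ?thesis by (simp add: order_def fact_numeral)
qed

context group begin

lemma card_FactGroup_sub_iso_alt_group_5:
  assumes "subgroup L G" "K \<lhd> G\<lparr>carrier := L\<rparr>" "G\<lparr>carrier := L\<rparr> Mod K \<cong> alt_group 5"
  shows "order (G\<lparr>carrier := L\<rparr> Mod K) = 60" "card L = 60 * card K"
proof -
  show "order (G\<lparr>carrier := L\<rparr> Mod K) = 60"
    using iso_same_card[OF assms(3)] order_alt_group_5 unfolding order_def by simp
  then show "card L = 60 * card K" using order_FactGroup_sub[OF assms(1,2)] by simp
qed

lemma conj_nat_pow:
  assumes g: "g \<in> carrier G" and x: "x \<in> carrier G"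
  shows "(g \<otimes> x \<otimes> inv g) [^] (n::nat) = g \<otimes> x [^] n \<otimes> inv g"
proof (induction n)
  case (Suc n)
  then show ?case using g x by (simp add: m_assoc)
qed (use g in simp)

lemma conj_image_normal_in_normal:
  assumes N: "N \<lhd> G" and K: "K \<lhd> G\<lparr>carrier := N\<rparr>" and g: "g \<in> carrier G"
  shows "(\<lambda>k. g \<otimes> k \<otimes> inv g) ` K \<lhd> G\<lparr>carrier := N\<rparr>"
proof -
  have sN: "subgroup N G" using normal_imp_subgroup[OF N] .
  have sK: "subgroup K G" and KN: "K \<subseteq> N" using normal_in_subgroupD[OF sN K] by auto
  have KG: "K \<subseteq> carrier G" using subgroup.subset[OF sK] .
  have "g <# K #> inv g = (\<lambda>k. g \<otimes> k \<otimes> inv g) ` K"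
    unfolding l_coset_def r_coset_def by auto
  then have "subgroup ((\<lambda>k. g \<otimes> k \<otimes> inv g) ` K) G"
    using subgroup_conjugation_is_surj2[OF g sK] by simp
  moreover have "(\<lambda>k. g \<otimes> k \<otimes> inv g) ` K \<subseteq> N"
    using normal.inv_op_closed2[OF N g] KN by blast
  moreover have "x \<otimes> (g \<otimes> k \<otimes> inv g) \<otimes> inv x \<in> (\<lambda>k. g \<otimes> k \<otimes> inv g) ` K"
    if x: "x \<in> N" and k: "k \<in> K" for x k
  proof -
    have xG: "x \<in> carrier G" and kG: "k \<in> carrier G"
      using x k subgroup.mem_carrier[OF sN] KG by auto
    have "inv g \<otimes> x \<otimes> g \<in> N" using normal.inv_op_closed1[OF N g x] .
    then have "(inv g \<otimes> x \<otimes> g) \<otimes> k \<otimes> inv (inv g \<otimes> x \<otimes> g) \<in> K"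
      using normal_in_subgroupD(3)[OF sN K _ k] by blast
    moreover have "x \<otimes> (g \<otimes> k \<otimes> inv g) \<otimes> inv x =
        g \<otimes> ((inv g \<otimes> x \<otimes> g) \<otimes> k \<otimes> inv (inv g \<otimes> x \<otimes> g)) \<otimes> inv g"
      using g xG kG by (simp add: m_assoc inv_mult_group)
    ultimately show ?thesis by blast
  qed
  ultimately show ?thesis using normal_in_subgroup_iff[OF sN] by blast
qed

lemma conj_mem_conj_image_iff:
  assumes "g \<in> carrier G" "x \<in> carrier G" "K \<subseteq> carrier G"
  shows "g \<otimes> x \<otimes> inv g \<in> (\<lambda>k. g \<otimes> k \<otimes> inv g) ` K \<longleftrightarrow> x \<in> K"
  using assms by auto

lemma conj_image_subset_if_no_ord_15:
  assumes fin: "finite (carrier G)" and no15: "\<And>y. y \<in> carrier G \<Longrightarrow> ord y \<noteq> 15"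
    and N: "N \<lhd> G" and K: "K \<lhd> G\<lparr>carrier := N\<rparr>"
    and max: "\<And>T. T \<lhd> G\<lparr>carrier := N\<rparr> \<Longrightarrow> K \<subseteq> T \<Longrightarrow> T = K \<or> T = N"
    and a: "a \<in> N" "a [^] (3::nat) \<in> K" "a \<notin> K"
    and b: "b \<in> N" "b [^] (5::nat) \<in> K" "b \<notin> K"
    and g: "g \<in> carrier G"
  shows "(\<lambda>k. g \<otimes> k \<otimes> inv g) ` K \<subseteq> K"
proof (rule ccontr)
  let ?K' = "(\<lambda>k. g \<otimes> k \<otimes> inv g) ` K"
  assume not_sub: "\<not> ?K' \<subseteq> K"
  have sN: "subgroup N G" using normal_imp_subgroup[OF N] .
  interpret N: group "G\<lparr>carrier := N\<rparr>" by (rule subgroup_imp_group[OF sN])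
  have K': "?K' \<lhd> G\<lparr>carrier := N\<rparr>" by (rule conj_image_normal_in_normal[OF N K g])
  have sK: "subgroup K G" and sK': "subgroup ?K' G"
    using normal_in_subgroupD(1)[OF sN K] normal_in_subgroupD(1)[OF sN K'] .
  have KG: "K \<subseteq> carrier G" "?K' \<subseteq> carrier G" using subgroup.subset sK sK' by auto
  have prod: "K <#> ?K' \<lhd> G\<lparr>carrier := N\<rparr>"
    using N.normal_subgroup_set_mult_closed[OF K K'] by simp
  have "K \<subseteq> K <#> ?K'"
    using subgroup.one_closed[OF sK'] KG unfolding set_mult_def by force
  moreover have "?K' \<subseteq> K <#> ?K'"
    using subgroup.one_closed[OF sK] KG unfolding set_mult_def by force
  ultimately have KK': "K <#> ?K' = N" using max[OF prod] not_sub by blast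
  have bG: "b \<in> carrier G" using b(1) subgroup.mem_carrier[OF sN] by blast
  have "g \<otimes> b \<otimes> inv g \<in> N" using normal.inv_op_closed2[OF N g b(1)] .
  moreover have "(g \<otimes> b \<otimes> inv g) [^] (5::nat) \<in> ?K'" "g \<otimes> b \<otimes> inv g \<notin> ?K'"
    using conj_nat_pow[OF g bG] conj_mem_conj_image_iff[OF g _ KG(1)] bG b(2,3) by simp_all
  ultimately have "\<exists>y\<in>carrier (G\<lparr>carrier := N\<rparr>). N.ord y = 3 * 5"
    using KK' a finite_subset[OF subgroup.subset[OF sN] fin]
    by (intro N.exists_ord_mult_if_normal_product[OF _ K K', of 3 5 a "g \<otimes> b \<otimes> inv g"])
      (simp_all flip: nat_pow_consistent)
  then show False using no15 ord_consistent[OF sN] subgroup.mem_carrier[OF sN] by force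
qed

lemma maximal_normal_normal_if_A5:
  assumes fin: "finite (carrier G)" and no15: "\<And>y. y \<in> carrier G \<Longrightarrow> ord y \<noteq> 15"
    and N: "N \<lhd> G" and K: "K \<lhd> G\<lparr>carrier := N\<rparr>"
    and max: "\<And>T. T \<lhd> G\<lparr>carrier := N\<rparr> \<Longrightarrow> K \<subseteq> T \<Longrightarrow> T = K \<or> T = N"
    and iso: "G\<lparr>carrier := N\<rparr> Mod K \<cong> alt_group 5"
  shows "K \<lhd> G"
proof -
  have sN: "subgroup N G" using normal_imp_subgroup[OF N] .
  have order: "order (G\<lparr>carrier := N\<rparr> Mod K) = 60"
    using card_FactGroup_sub_iso_alt_group_5(1)[OF sN K iso] .
  have "\<exists>a\<in>N. a [^] (3::nat) \<in> K \<and> a \<notin> K" "\<exists>b\<in>N. b [^] (5::nat) \<in> K \<and> b \<notin> K"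
    by (rule exists_pow_prime_mem_if_dvd_order_FactGroup[OF fin sN K]; simp add: order)+
  then obtain a b where a: "a \<in> N" "a [^] (3::nat) \<in> K" "a \<notin> K"
    and b: "b \<in> N" "b [^] (5::nat) \<in> K" "b \<notin> K" by blast
  then have "g \<otimes> k \<otimes> inv g \<in> K" if "g \<in> carrier G" "k \<in> K" for g k
    using conj_image_subset_if_no_ord_15[OF fin no15 N K max a b that(1)] that(2) by blast
  then show ?thesis using normal_inv_iff normal_in_subgroupD(1)[OF sN K] by blast
qed

lemma commutator_mem_normal_core:
  assumes N: "N \<lhd> G" and K: "K \<lhd> G\<lparr>carrier := N\<rparr>" and comm: "comm_group (G\<lparr>carrier := N\<rparr> Mod K)"
    and x: "x \<in> N" and y: "y \<in> N"
  shows "x \<otimes> y \<otimes> inv x \<otimes> inv y \<in> normal_core K"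
proof -
  have sN: "subgroup N G" using normal_imp_subgroup[OF N] .
  have comm': "u \<otimes> v \<otimes> inv u \<otimes> inv v \<in> K" if "u \<in> N" "v \<in> N" for u v
    using comm_FactGroup_sub_iff[OF sN K] comm that by blast
  have G: "x \<in> carrier G" "y \<in> carrier G" using x y subgroup.mem_carrier[OF sN] by auto
  have "g \<otimes> (x \<otimes> y \<otimes> inv x \<otimes> inv y) \<otimes> inv g \<in> K" if g: "g \<in> carrier G" for g
  proof -
    have "g \<otimes> x \<otimes> inv g \<in> N" "g \<otimes> y \<otimes> inv g \<in> N"
      using normal.inv_op_closed2[OF N g] x y by auto
    then have "(g \<otimes> x \<otimes> inv g) \<otimes> (g \<otimes> y \<otimes> inv g) \<otimes> inv (g \<otimes> x \<otimes> inv g)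
        \<otimes> inv (g \<otimes> y \<otimes> inv g) \<in> K" by (rule comm')
    then show ?thesis using g G by (simp add: m_assoc inv_mult_group)
  qed
  then show ?thesis using comm'[OF x y] unfolding normal_core_def by blast
qed

lemma nonsolvable_chief_factor_A5:
  assumes fin: "finite (carrier G)" and ps: "pseudo_solvable G"
    and no15: "\<And>y. y \<in> carrier G \<Longrightarrow> ord y \<noteq> 15"
    and M: "M \<lhd> G" and N: "N \<lhd> G" and MN: "M \<subset> N"
    and chief: "\<And>T. T \<lhd> G \<Longrightarrow> M \<subseteq> T \<Longrightarrow> T \<subseteq> N \<Longrightarrow> T = M \<or> T = N"
    and ns: "\<not> solvable (G\<lparr>carrier := N\<rparr> Mod M)"
  shows "G\<lparr>carrier := N\<rparr> Mod M \<cong> alt_group 5"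
    and "\<And>T. T \<lhd> G\<lparr>carrier := N\<rparr> \<Longrightarrow> M \<subseteq> T \<Longrightarrow> T = M \<or> T = N"
proof -
  have sN: "subgroup N G" using normal_imp_subgroup[OF N] .
  interpret N: group "G\<lparr>carrier := N\<rparr>" by (rule subgroup_imp_group[OF sN])
  have finN: "finite (carrier (G\<lparr>carrier := N\<rparr>))"
    using finite_subset[OF subgroup.subset[OF sN] fin] by simp
  have MN': "M \<lhd> G\<lparr>carrier := N\<rparr>" using normal_restrict_supergroup[OF sN M] MN by blast
  obtain K where K: "K \<lhd> G\<lparr>carrier := N\<rparr>" "M \<subseteq> K" "K \<noteq> carrier (G\<lparr>carrier := N\<rparr>)"
    and max: "\<And>T. T \<lhd> G\<lparr>carrier := N\<rparr> \<Longrightarrow> K \<subseteq> T \<Longrightarrow> T = K \<or> T = carrier (G\<lparr>carrier := N\<rparr>)"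
    using N.exists_maximal_normal_subgroup[OF finN MN'] MN by auto
  have sK: "subgroup K G" and KN: "K \<subseteq> N" "K \<noteq> N" using normal_in_subgroupD[OF sN K(1)] K(3) by auto
  have simple: "simple_group (G\<lparr>carrier := N\<rparr> Mod K)"
    by (rule N.maximal_normal_imp_simple_FactGroup[OF finN K(1) K(3) max])
  have core: "normal_core K = M"
  proof -
    have "normal_core K \<noteq> N" using normal_core_subset[of K] KN by blast
    moreover have "M \<subseteq> normal_core K" using normal_subset_normal_core[OF M K(2)] .
    ultimately show ?thesis
      using chief[OF normal_core_normal[OF sK]] normal_core_subset[of K] KN by blast
  qed
  have "\<not> comm_group (G\<lparr>carrier := N\<rparr> Mod K)"
  proof
    assume "comm_group (G\<lparr>carrier := N\<rparr> Mod K)"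
    then have "comm_group (G\<lparr>carrier := N\<rparr> Mod M)"
      using comm_FactGroup_sub_iff[OF sN MN'] commutator_mem_normal_core[OF N K(1)] core by simp
    then show False using ns comm_group_imp_solvable by blast
  qed
  then have iso: "G\<lparr>carrier := N\<rparr> Mod K \<cong> alt_group 5"
    using pseudo_solvable_simple_section[OF fin ps N K(1) simple]
      group.cyclic_imp_abelian_group[OF normal.factorgroup_is_group[OF K(1)]] by blast
  have "K \<lhd> G" using maximal_normal_normal_if_A5[OF fin no15 N K(1) _ iso] max by simp
  then have "K = M" using chief K(2) KN by blast
  then show "G\<lparr>carrier := N\<rparr> Mod M \<cong> alt_group 5"
    and "\<And>T. T \<lhd> G\<lparr>carrier := N\<rparr> \<Longrightarrow> M \<subseteq> T \<Longrightarrow> T = M \<or> T = N"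
    using iso max by auto
qed

end

section \<open>Two non-solvable chief factors\<close>

context group begin

definition mod_centralizer :: "'a set \<Rightarrow> 'a set \<Rightarrow> 'a set"
  where "mod_centralizer B S = {z \<in> carrier G. \<forall>y\<in>S. B #> (z \<otimes> y) = B #> (y \<otimes> z)}"

lemma mod_centralizer_subgroup:
  assumes B: "B \<lhd> G" and S: "S \<subseteq> carrier G"
  shows "subgroup (mod_centralizer B S) G"
proof (rule subgroupI)
  have BG: "B \<subseteq> carrier G" using subgroup.subset[OF normal_imp_subgroup[OF B]] .
  show "mod_centralizer B S \<subseteq> carrier G" unfolding mod_centralizer_def by blast
  have "\<one> \<in> mod_centralizer B S" using S unfolding mod_centralizer_def by auto
  then show "mod_centralizer B S \<noteq> {}" by blast
  show "inv z \<in> mod_centralizer B S" if z: "z \<in> mod_centralizer B S" for z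
  proof -
    have zG: "z \<in> carrier G" using z unfolding mod_centralizer_def by blast
    have "B #> (inv z \<otimes> y) = B #> (y \<otimes> inv z)" if y: "y \<in> S" for y
    proof -
      have yG: "y \<in> carrier G" using y S by blast
      have e: "B #> (z \<otimes> y) = B #> (y \<otimes> z)" using z y unfolding mod_centralizer_def by blast
      have e': "B #> (inv z \<otimes> (z \<otimes> y)) = B #> (inv z \<otimes> (y \<otimes> z))"
        by (rule rcos_eq_mult_left[OF B _ _ inv_closed[OF zG] e]) (use zG yG in simp_all)
      have "B #> (inv z \<otimes> (z \<otimes> y) \<otimes> inv z) = B #> (inv z \<otimes> (y \<otimes> z) \<otimes> inv z)"
        by (rule rcos_eq_mult_right[OF BG _ _ inv_closed[OF zG] e']) (use zG yG in simp_all)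
      then show ?thesis using zG yG by (simp add: m_assoc)
    qed
    then show ?thesis using zG unfolding mod_centralizer_def by simp
  qed
  show "z1 \<otimes> z2 \<in> mod_centralizer B S"
    if z1: "z1 \<in> mod_centralizer B S" and z2: "z2 \<in> mod_centralizer B S" for z1 z2
  proof -
    have G: "z1 \<in> carrier G" "z2 \<in> carrier G" using z1 z2 unfolding mod_centralizer_def by auto
    have "B #> (z1 \<otimes> z2 \<otimes> y) = B #> (y \<otimes> (z1 \<otimes> z2))" if y: "y \<in> S" for y
    proof -
      have yG: "y \<in> carrier G" using y S by blast
      have "B #> (z1 \<otimes> (z2 \<otimes> y)) = B #> (z1 \<otimes> (y \<otimes> z2))"
        using z2 y rcos_eq_mult_left[OF B _ _ G(1)] G yG unfolding mod_centralizer_def by simp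
      also have "\<dots> = B #> (z1 \<otimes> y \<otimes> z2)" using G yG by (simp add: m_assoc)
      also have "\<dots> = B #> (y \<otimes> z1 \<otimes> z2)"
        using z1 y unfolding mod_centralizer_def
        by (intro rcos_eq_mult_right[OF BG _ _ G(2)]) (use G yG in auto)
      finally show ?thesis using G yG by (simp add: m_assoc)
    qed
    then show ?thesis using G unfolding mod_centralizer_def by simp
  qed
qed

lemma mod_centralizer_normal:
  assumes B: "B \<lhd> G" and A: "A \<lhd> G"
  shows "mod_centralizer B A \<lhd> G"
proof -
  have AG: "A \<subseteq> carrier G" using subgroup.subset[OF normal_imp_subgroup[OF A]] .
  have "g \<otimes> z \<otimes> inv g \<in> mod_centralizer B A"
    if g: "g \<in> carrier G" and z: "z \<in> mod_centralizer B A" for g z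
  proof -
    have zG: "z \<in> carrier G" using z unfolding mod_centralizer_def by blast
    have "B #> (g \<otimes> z \<otimes> inv g \<otimes> y) = B #> (y \<otimes> (g \<otimes> z \<otimes> inv g))" if y: "y \<in> A" for y
    proof -
      have yG: "y \<in> carrier G" using y AG by blast
      have "inv g \<otimes> y \<otimes> g \<in> A" using normal.inv_op_closed1[OF A g y] .
      then have "B #> (z \<otimes> (inv g \<otimes> y \<otimes> g)) = B #> ((inv g \<otimes> y \<otimes> g) \<otimes> z)"
        using z unfolding mod_centralizer_def by blast
      then have "B #> (g \<otimes> (z \<otimes> (inv g \<otimes> y \<otimes> g)) \<otimes> inv g)
          = B #> (g \<otimes> ((inv g \<otimes> y \<otimes> g) \<otimes> z) \<otimes> inv g)"
        using rcos_eq_conj[OF B _ _ g] zG yG g by simp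
      then show ?thesis using g zG yG by (simp add: m_assoc)
    qed
    then show ?thesis using g zG unfolding mod_centralizer_def by simp
  qed
  then show ?thesis using normal_invI mod_centralizer_subgroup[OF B AG] by blast
qed

lemma subset_mod_centralizer:
  assumes B: "B \<lhd> G" and S: "S \<subseteq> carrier G"
  shows "B \<subseteq> mod_centralizer B S"
proof
  fix b assume b: "b \<in> B"
  have sB: "subgroup B G" using normal_imp_subgroup[OF B] .
  have bG: "b \<in> carrier G" using b subgroup.mem_carrier[OF sB] by blast
  have "B #> (b \<otimes> y) = B #> (y \<otimes> b)" if y: "y \<in> S" for y
  proof -
    have yG: "y \<in> carrier G" using y S by blast
    have "(b \<otimes> y) \<otimes> inv (y \<otimes> b) = b \<otimes> (y \<otimes> inv b \<otimes> inv y)"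
      using bG yG by (simp add: m_assoc inv_mult_group)
    moreover have "y \<otimes> inv b \<otimes> inv y \<in> B"
      using normal.inv_op_closed2[OF B yG subgroup.m_inv_closed[OF sB b]] .
    ultimately have "(b \<otimes> y) \<otimes> inv (y \<otimes> b) \<in> B" using subgroup.m_closed[OF sB b] by simp
    then show ?thesis using rcos_eq_iff[OF sB] bG yG by simp
  qed
  then show "b \<in> mod_centralizer B S" using bG unfolding mod_centralizer_def by blast
qed

lemma comm_FactGroup_if_subset_mod_centralizer:
  assumes A: "subgroup A G" and B: "B \<lhd> G\<lparr>carrier := A\<rparr>" and AZ: "A \<subseteq> mod_centralizer B A"
  shows "comm_group (G\<lparr>carrier := A\<rparr> Mod B)"
proof -
  have sB: "subgroup B G" using normal_in_subgroupD(1)[OF A B] .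
  have "x \<otimes> y \<otimes> inv x \<otimes> inv y \<in> B" if x: "x \<in> A" and y: "y \<in> A" for x y
  proof -
    have G: "x \<in> carrier G" "y \<in> carrier G" using x y subgroup.mem_carrier[OF A] by auto
    have "B #> (x \<otimes> y) = B #> (y \<otimes> x)" using AZ x y unfolding mod_centralizer_def by blast
    then have "(x \<otimes> y) \<otimes> inv (y \<otimes> x) \<in> B" using rcos_eq_iff[OF sB] G by simp
    then show ?thesis using G by (simp add: m_assoc inv_mult_group)
  qed
  then show ?thesis using comm_FactGroup_sub_iff[OF A B] by blast
qed




lemma mod_centralizer_Int_chief_factor:
  assumes B: "B \<lhd> G" and A: "A \<lhd> G" and BA: "B \<subseteq> A"
    and chief: "\<And>T. T \<lhd> G \<Longrightarrow> B \<subseteq> T \<Longrightarrow> T \<subseteq> A \<Longrightarrow> T = B \<or> T = A"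
    and ns: "\<not> solvable (G\<lparr>carrier := A\<rparr> Mod B)"
  shows "A \<inter> mod_centralizer B A = B"
proof -
  have sA: "subgroup A G" using normal_imp_subgroup[OF A] .
  have AG: "A \<subseteq> carrier G" using subgroup.subset[OF sA] .
  have "A \<inter> mod_centralizer B A \<lhd> G"
    using normal_subgroup_intersect[OF A mod_centralizer_normal[OF B A]] .
  moreover have "B \<subseteq> A \<inter> mod_centralizer B A" using subset_mod_centralizer[OF B AG] BA by blast
  moreover have "A \<inter> mod_centralizer B A \<noteq> A"
  proof
    assume "A \<inter> mod_centralizer B A = A"
    then have "comm_group (G\<lparr>carrier := A\<rparr> Mod B)"
      using comm_FactGroup_if_subset_mod_centralizer[OF sA normal_restrict_supergroup[OF sA B BA]]
      by blast
    then show False using ns comm_group_imp_solvable by blast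
  qed
  ultimately show ?thesis using chief by blast
qed

text \<open>The elements of A commuting with z modulo B form a subgroup containing B, a and b, hence
  of index at most 4 in A; if it were proper, the maximality of B would give |A : B| \<le> 4! < 60.\<close>

lemma mod_centralizer_subset_if_orders_3_5:
  assumes fin: "finite (carrier G)" and B: "B \<lhd> G" and A: "subgroup A G" and BA: "B \<subseteq> A"
    and maxB: "\<And>T. T \<lhd> G\<lparr>carrier := A\<rparr> \<Longrightarrow> B \<subseteq> T \<Longrightarrow> T = B \<or> T = A"
    and card: "card A = 60 * card B"
    and a: "a \<in> A" "a [^] (3::nat) \<in> B" "a \<notin> B"
    and b: "b \<in> A" "b [^] (5::nat) \<in> B" "b \<notin> B"
  shows "mod_centralizer B {a, b} \<subseteq> mod_centralizer B A"
proof
  fix z assume z: "z \<in> mod_centralizer B {a, b}"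
  have zG: "z \<in> carrier G" using z unfolding mod_centralizer_def by blast
  have AG: "A \<subseteq> carrier G" using subgroup.subset[OF A] .
  define Cz where "Cz = A \<inter> mod_centralizer B {z}"
  have sCz: "subgroup Cz G"
    unfolding Cz_def using subgroups_Inter_pair[OF A mod_centralizer_subgroup[OF B]] zG by blast
  have BCz: "B \<subseteq> Cz" unfolding Cz_def using subset_mod_centralizer[OF B] zG BA by blast
  have abCz: "a \<in> Cz" "b \<in> Cz"
    using z a(1) b(1) AG unfolding Cz_def mod_centralizer_def by auto
  have "Cz = A"
  proof (rule ccontr)
    assume CzA: "Cz \<noteq> A"
    have BnCz: "B \<lhd> G\<lparr>carrier := Cz\<rparr>" using normal_restrict_supergroup[OF sCz B BCz] .
    have "3 dvd order (G\<lparr>carrier := Cz\<rparr> Mod B)" "5 dvd order (G\<lparr>carrier := Cz\<rparr> Mod B)"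
      using prime_dvd_order_FactGroup_if_pow_mem[OF sCz BnCz] abCz a(2,3) b(2,3) by simp_all
    then have "15 dvd order (G\<lparr>carrier := Cz\<rparr> Mod B)" by presburger
    then obtain t where t: "card Cz = 15 * t * card B"
      using order_FactGroup_sub[OF sCz BnCz] by (metis dvdE)
    interpret A: group "G\<lparr>carrier := A\<rparr>" by (rule subgroup_imp_group[OF A])
    have finA: "finite (carrier (G\<lparr>carrier := A\<rparr>))" using finite_subset[OF AG fin] by simp
    have CzA': "subgroup Cz (G\<lparr>carrier := A\<rparr>)" using subgroup_incl[OF sCz A] Cz_def by blast
    have BnA: "B \<lhd> G\<lparr>carrier := A\<rparr>" using normal_restrict_supergroup[OF A B BA] .
    have cardB: "card B > 0" using subgroup.finite_imp_card_positive[OF normal_imp_subgroup[OF B] fin] .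
    define r where "r = card (rcosets\<^bsub>G\<lparr>carrier := A\<rparr>\<^esub> Cz)"
    have "r * card Cz = card A" using A.lagrange[OF CzA'] unfolding r_def by (simp add: order_def)
    then have "r * t * 15 * card B = 60 * card B" using t card by (simp add: ac_simps)
    then have "r * t = 4" using cardB by simp
    then have "r \<le> 4" by (cases t) auto
    have "card (rcosets\<^bsub>G\<lparr>carrier := A\<rparr>\<^esub> B) \<le> fact r"
      using A.card_rcosets_maximal_normal_le[OF finA CzA' _ BnA BCz] CzA maxB unfolding r_def by simp
    also have "\<dots> \<le> fact 4" using \<open>r \<le> 4\<close> by (rule fact_mono)
    finally have "card (rcosets\<^bsub>G\<lparr>carrier := A\<rparr>\<^esub> B) * card B \<le> 24 * card B"
      by (simp add: fact_numeral)
    moreover have "card (rcosets\<^bsub>G\<lparr>carrier := A\<rparr>\<^esub> B) * card B = card A"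
      using A.lagrange[OF normal_imp_subgroup[OF BnA]] by (simp add: order_def)
    ultimately show False using card cardB by simp
  qed
  then show "z \<in> mod_centralizer B A"
    using zG unfolding Cz_def mod_centralizer_def by blast
qed

lemma conj_rcos_eq_imp_mod_centralizer:
  assumes B: "B \<lhd> G" and g: "g \<in> carrier G" and g': "g' \<in> carrier G" and y: "y \<in> carrier G"
    and e: "B #> (g \<otimes> y \<otimes> inv g) = B #> (g' \<otimes> y \<otimes> inv g')"
  shows "inv g' \<otimes> g \<in> mod_centralizer B {y}"
proof -
  define u where "u = inv g' \<otimes> g"
  have uG: "u \<in> carrier G" unfolding u_def using g g' by simp
  have "B #> (inv g' \<otimes> (g \<otimes> y \<otimes> inv g) \<otimes> inv (inv g')) =
      B #> (inv g' \<otimes> (g' \<otimes> y \<otimes> inv g') \<otimes> inv (inv g'))"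
    by (rule rcos_eq_conj[OF B _ _ inv_closed[OF g'] e]) (use g g' y in simp_all)
  then have "B #> (u \<otimes> y \<otimes> inv u) = B #> y"
    unfolding u_def using g g' y by (simp add: m_assoc inv_mult_group)
  then have "B #> (u \<otimes> y \<otimes> inv u \<otimes> u) = B #> (y \<otimes> u)"
    by (rule rcos_eq_mult_right[OF subgroup.subset[OF normal_imp_subgroup[OF B]] _ y uG, rotated])
      (use uG y in simp)
  then show ?thesis using uG y unfolding u_def[symmetric] mod_centralizer_def by (simp add: m_assoc)
qed

lemma card_rcosets_mod_centralizer_le:
  assumes fin: "finite (carrier G)" and B: "B \<lhd> G" and A: "A \<lhd> G" and BA: "B \<subseteq> A"
    and card: "card A = 60 * card B"
    and a: "a \<in> A" "a \<notin> B" and b: "b \<in> A" "b \<notin> B"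
    and gen: "mod_centralizer B {a, b} \<subseteq> mod_centralizer B A"
  shows "card (rcosets (mod_centralizer B A)) \<le> 59 * 59"
proof -
  let ?Z = "mod_centralizer B A" and ?Q = "G\<lparr>carrier := A\<rparr> Mod B"
  have sA: "subgroup A G" and sB: "subgroup B G" using A B normal_imp_subgroup by auto
  have AG: "A \<subseteq> carrier G" using subgroup.subset[OF sA] .
  have BnA: "B \<lhd> G\<lparr>carrier := A\<rparr>" using normal_restrict_supergroup[OF sA B BA] .
  have Z: "?Z \<lhd> G" using mod_centralizer_normal[OF B A] .
  define V where "V = carrier ?Q - {B}"
  have finQ: "finite (carrier ?Q)" using finite_subset[OF AG fin] by (simp add: carrier_FactGroup)
  have "card (carrier ?Q) = 60"
    using order_FactGroup_sub[OF sA BnA] card subgroup.finite_imp_card_positive[OF sB fin]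
    unfolding order_def by simp
  moreover have "B \<in> carrier ?Q"
  proof -
    have "B #> \<one> \<in> carrier ?Q"
      using imageI[OF subgroup.one_closed[OF sA], of "\<lambda>x. B #> x"] by (simp add: carrier_FactGroup)
    then show ?thesis using coset_mult_one[OF subgroup.subset[OF sB]] by simp
  qed
  ultimately have cardV: "card V = 59" unfolding V_def using finQ by (simp add: card_Diff_singleton)
  define \<phi> where "\<phi> g = (B #> (g \<otimes> a \<otimes> inv g), B #> (g \<otimes> b \<otimes> inv g))" for g
  have conj_V: "B #> (g \<otimes> y \<otimes> inv g) \<in> V" if g: "g \<in> carrier G" and y: "y \<in> A" "y \<notin> B" for g y
  proof -
    have yG: "y \<in> carrier G" using y AG by blast
    have gy: "g \<otimes> y \<otimes> inv g \<in> A" using normal.inv_op_closed2[OF A g y(1)] .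
    have "B #> (g \<otimes> y \<otimes> inv g) \<noteq> B"
    proof
      assume "B #> (g \<otimes> y \<otimes> inv g) = B"
      then have "g \<otimes> y \<otimes> inv g \<in> B" using rcos_eq_self_iff[OF sB] gy AG by blast
      then have "inv g \<otimes> (g \<otimes> y \<otimes> inv g) \<otimes> g \<in> B" using normal.inv_op_closed1[OF B g] by blast
      then show False using g yG y(2) by (simp add: m_assoc)
    qed
    then show ?thesis using gy unfolding V_def by (simp add: carrier_FactGroup)
  qed
  have "g \<otimes> inv g' \<in> ?Z" if g: "g \<in> carrier G" and g': "g' \<in> carrier G" and e: "\<phi> g = \<phi> g'" for g g'
  proof -
    have "a \<in> carrier G" "b \<in> carrier G" using a(1) b(1) AG by auto
    then have "inv g' \<otimes> g \<in> mod_centralizer B {a}" "inv g' \<otimes> g \<in> mod_centralizer B {b}"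
      using conj_rcos_eq_imp_mod_centralizer[OF B g g'] e unfolding \<phi>_def by simp_all
    then have "inv g' \<otimes> g \<in> mod_centralizer B {a, b}" unfolding mod_centralizer_def by blast
    then have "inv g' \<otimes> g \<in> ?Z" using gen by blast
    then have "g' \<otimes> (inv g' \<otimes> g) \<otimes> inv g' \<in> ?Z" using normal.inv_op_closed2[OF Z g'] by blast
    then show ?thesis using g g' by (simp add: m_assoc)
  qed
  then have "card (rcosets ?Z) \<le> card (\<phi> ` carrier G)"
    by (rule card_rcosets_le_card_image[OF fin normal_imp_subgroup[OF Z]])
  also have "\<dots> \<le> card (V \<times> V)"
    using conj_V a b finQ unfolding \<phi>_def V_def by (intro card_mono) auto
  finally show ?thesis using cardV by (simp add: card_cartesian_product)
qed

lemma exists_ord_15_if_Int_not_subset: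
  assumes fin: "finite (carrier G)" and Z: "Z \<lhd> G" and C: "subgroup C G"
    and D: "D \<lhd> G\<lparr>carrier := C\<rparr>"
    and maxD: "\<And>T. T \<lhd> G\<lparr>carrier := C\<rparr> \<Longrightarrow> D \<subseteq> T \<Longrightarrow> T = D \<or> T = C"
    and CZ: "\<not> C \<inter> Z \<subseteq> D"
    and a: "a \<in> C" "a [^] (3::nat) \<in> Z" "a \<notin> Z"
    and c: "c \<in> C" "c [^] (5::nat) \<in> D" "c \<notin> D"
  shows "\<exists>y\<in>carrier G. ord y = 15"
proof -
  interpret C: group "G\<lparr>carrier := C\<rparr>" by (rule subgroup_imp_group[OF C])
  have finC: "finite (carrier (G\<lparr>carrier := C\<rparr>))" using finite_subset[OF subgroup.subset[OF C] fin] by simp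
  have ZC: "Z \<inter> C \<lhd> G\<lparr>carrier := C\<rparr>" using normal_Int_subgroup[OF C Z] .
  have sZC: "subgroup (Z \<inter> C) G" and sD: "subgroup D G"
    using normal_in_subgroupD(1)[OF C ZC] normal_in_subgroupD(1)[OF C D] by auto
  have prod: "(Z \<inter> C) <#> D \<lhd> G\<lparr>carrier := C\<rparr>"
    using C.normal_subgroup_set_mult_closed[OF ZC D] by simp
  have "D \<subseteq> (Z \<inter> C) <#> D"
    using subgroup.one_closed[OF sZC] subgroup.subset[OF sD] unfolding set_mult_def by force
  moreover have "Z \<inter> C \<subseteq> (Z \<inter> C) <#> D"
    using subgroup.one_closed[OF sD] subgroup.subset[OF sZC] unfolding set_mult_def by force
  ultimately have "(Z \<inter> C) <#> D = C" using maxD[OF prod] CZ by blast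
  moreover have "a [^] (3::nat) \<in> C" using C.nat_pow_closed[of a 3] a(1) by (simp flip: nat_pow_consistent)
  ultimately have "\<exists>y\<in>carrier (G\<lparr>carrier := C\<rparr>). C.ord y = 3 * 5"
    using a c by (intro C.exists_ord_mult_if_normal_product[OF finC ZC D, of 3 5 a c])
      (simp_all flip: nat_pow_consistent)
  then show ?thesis using ord_consistent[OF C] subgroup.mem_carrier[OF C] by force
qed

lemma Int_subset_contradicts_index_bound:
  assumes fin: "finite (carrier G)" and Z: "subgroup Z G" and C: "subgroup C G"
    and A: "subgroup A G" and D: "subgroup D G" and AD: "A \<subseteq> D" and CZ: "C \<inter> Z \<subseteq> D"
    and card_A: "card A = 60 * card (A \<inter> Z)" and card_C: "card C = 60 * card D"
    and index: "card (rcosets Z) \<le> 59 * 59"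
  shows False
proof -
  have CZ': "subgroup (C \<inter> Z) G" using subgroups_Inter_pair[OF C Z] .
  have pos: "card (A \<inter> Z) > 0" "card Z > 0" "card (C \<inter> Z) > 0"
    using subgroup.finite_imp_card_positive[OF subgroups_Inter_pair[OF A Z] fin]
      subgroup.finite_imp_card_positive[OF Z fin] subgroup.finite_imp_card_positive[OF CZ' fin] by auto
  have x: "card (C \<inter> Z) * 60 \<le> card D"
  proof -
    interpret D: group "G\<lparr>carrier := D\<rparr>" by (rule subgroup_imp_group[OF D])
    have "card A * card (C \<inter> Z) \<le> card D * card (A \<inter> (C \<inter> Z))"
      using D.card_mult_le_order_mult_card_Int[OF _ subgroup_incl[OF A D AD] subgroup_incl[OF CZ' D CZ]]
        finite_subset[OF subgroup.subset[OF D] fin] by (simp add: order_def)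
    moreover have "card (A \<inter> (C \<inter> Z)) \<le> card (A \<inter> Z)"
      using finite_subset[OF subgroup.subset[OF A] fin] by (intro card_mono) auto
    ultimately have "card A * card (C \<inter> Z) \<le> card D * card (A \<inter> Z)"
      by (meson le_trans mult_le_mono2)
    then show ?thesis using card_A pos(1) by (simp add: ac_simps)
  qed
  have g: "order G \<le> 3481 * card Z"
  proof -
    have "card (rcosets Z) * card Z \<le> 3481 * card Z" using index by (simp add: mult_le_mono1)
    then show ?thesis using lagrange[OF Z] by simp
  qed
  have "3600 * (card (C \<inter> Z) * card Z) = 60 * (card (C \<inter> Z) * 60) * card Z" by simp
  also have "\<dots> \<le> 60 * card D * card Z" using x by simp
  also have "\<dots> = card C * card Z" using card_C by simp
  also have "\<dots> \<le> order G * card (C \<inter> Z)" using card_mult_le_order_mult_card_Int[OF fin C Z] .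
  also have "\<dots> \<le> 3481 * card Z * card (C \<inter> Z)" using g by simp
  finally show False using pos by (simp add: ac_simps)
qed

lemma exists_ord_15_if_two_A5_factors:
  assumes fin: "finite (carrier G)"
    and B: "B \<lhd> G" and A: "A \<lhd> G" and D: "D \<lhd> G" and C: "subgroup C G"
    and BA: "B \<subseteq> A" and AD: "A \<subseteq> D" and DC: "D \<subseteq> C"
    and chief: "\<And>T. T \<lhd> G \<Longrightarrow> B \<subseteq> T \<Longrightarrow> T \<subseteq> A \<Longrightarrow> T = B \<or> T = A"
    and ns: "\<not> solvable (G\<lparr>carrier := A\<rparr> Mod B)"
    and isoA: "G\<lparr>carrier := A\<rparr> Mod B \<cong> alt_group 5"
    and maxB: "\<And>T. T \<lhd> G\<lparr>carrier := A\<rparr> \<Longrightarrow> B \<subseteq> T \<Longrightarrow> T = B \<or> T = A"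
    and isoC: "G\<lparr>carrier := C\<rparr> Mod D \<cong> alt_group 5"
    and maxD: "\<And>T. T \<lhd> G\<lparr>carrier := C\<rparr> \<Longrightarrow> D \<subseteq> T \<Longrightarrow> T = D \<or> T = C"
  shows "\<exists>y\<in>carrier G. ord y = 15"
proof -
  let ?Z = "mod_centralizer B A"
  have sA: "subgroup A G" using normal_imp_subgroup[OF A] .
  have BnA: "B \<lhd> G\<lparr>carrier := A\<rparr>" using normal_restrict_supergroup[OF sA B BA] .
  have DnC: "D \<lhd> G\<lparr>carrier := C\<rparr>" using normal_restrict_supergroup[OF C D DC] .
  have Z: "?Z \<lhd> G" using mod_centralizer_normal[OF B A] .
  have AZ: "A \<inter> ?Z = B" using mod_centralizer_Int_chief_factor[OF B A BA chief ns] .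
  note orderA = card_FactGroup_sub_iso_alt_group_5[OF sA BnA isoA]
  note orderC = card_FactGroup_sub_iso_alt_group_5[OF C DnC isoC]
  have "\<exists>a\<in>A. a [^] (3::nat) \<in> B \<and> a \<notin> B" "\<exists>b\<in>A. b [^] (5::nat) \<in> B \<and> b \<notin> B"
    by (rule exists_pow_prime_mem_if_dvd_order_FactGroup[OF fin sA BnA]; simp add: orderA)+
  then obtain a b where a: "a \<in> A" "a [^] (3::nat) \<in> B" "a \<notin> B"
    and b: "b \<in> A" "b [^] (5::nat) \<in> B" "b \<notin> B" by blast
  have "\<exists>c\<in>C. c [^] (5::nat) \<in> D \<and> c \<notin> D"
    by (rule exists_pow_prime_mem_if_dvd_order_FactGroup[OF fin C DnC]) (simp_all add: orderC)
  then obtain c where c: "c \<in> C" "c [^] (5::nat) \<in> D" "c \<notin> D" by blast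
  show ?thesis
  proof (cases "C \<inter> ?Z \<subseteq> D")
    case False
    moreover have "a \<in> C" "a [^] (3::nat) \<in> ?Z" "a \<notin> ?Z" using a AZ BA AD DC by blast+
    ultimately show ?thesis using exists_ord_15_if_Int_not_subset[OF fin Z C DnC maxD] c by blast
  next
    case True
    have "card (rcosets ?Z) \<le> 59 * 59"
      using card_rcosets_mod_centralizer_le[OF fin B A BA orderA(2) a(1,3) b(1,3)]
        mod_centralizer_subset_if_orders_3_5[OF fin B sA BA maxB orderA(2) a b] by blast
    then show ?thesis
      using Int_subset_contradicts_index_bound[OF fin normal_imp_subgroup[OF Z] C sA
          normal_imp_subgroup[OF D] AD True _ orderC(2)] orderA(2) AZ by simp
  qed
qed




lemma chief_series_nonsolvable_factor:
  assumes fin: "finite (carrier G)" and ps: "pseudo_solvable G"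
    and no15: "\<And>y. y \<in> carrier G \<Longrightarrow> ord y \<noteq> 15"
    and cs: "chief_series G Ns" and i: "Suc i < length Ns"
    and ns: "\<not> solvable (series_factor G Ns i)"
  shows "series_factor G Ns i \<cong> alt_group 5"
    and "\<And>T. T \<lhd> G\<lparr>carrier := Ns ! Suc i\<rparr> \<Longrightarrow> Ns ! i \<subseteq> T \<Longrightarrow> T = Ns ! i \<or> T = Ns ! Suc i"
  using nonsolvable_chief_factor_A5[OF fin ps no15 chief_series_normal[OF cs] chief_series_normal[OF cs i]
      chief_series_step[OF cs i] chief_series_minimal[OF cs i]] i ns
  unfolding series_factor_def by auto

lemma chief_series_two_nonsolvable_factors:
  assumes fin: "finite (carrier G)" and ps: "pseudo_solvable G"
    and no15: "\<And>y. y \<in> carrier G \<Longrightarrow> ord y \<noteq> 15"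
    and cs: "chief_series G Ns" and ij: "i < j" and j: "Suc j < length Ns"
    and nsi: "\<not> solvable (series_factor G Ns i)" and nsj: "\<not> solvable (series_factor G Ns j)"
  shows False
proof -
  have i: "Suc i < length Ns" using ij j by simp
  note N = chief_series_normal[OF cs]
  have incl: "Ns ! i \<subseteq> Ns ! Suc i" "Ns ! Suc i \<subseteq> Ns ! j" "Ns ! j \<subseteq> Ns ! Suc j"
    using chief_series_step[OF cs i] chief_series_step[OF cs j] chief_series_mono[OF cs _ Suc_lessD[OF j]] ij
    by auto
  note Ai = chief_series_nonsolvable_factor[OF fin ps no15 cs i nsi]
  note Aj = chief_series_nonsolvable_factor[OF fin ps no15 cs j nsj]
  have "\<exists>y\<in>carrier G. ord y = 15"
    using nsi Ai(1) Aj(1) unfolding series_factor_def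
    by (intro exists_ord_15_if_two_A5_factors[OF fin N[OF Suc_lessD[OF i]] N[OF i] N[OF Suc_lessD[OF j]]
        normal_imp_subgroup[OF N[OF j]] incl chief_series_minimal[OF cs i] _ _ Ai(2) _ Aj(2)])
  then show False using no15 by blast
qed

end

lemma compl_prime_graph_edge_imp_ord_neq:
  assumes "compl_prime_graph_edge G p q" "x \<in> carrier G"
  shows "group.ord G x \<noteq> p * q"
  using assms unfolding compl_prime_graph_edge_def prime_graph_edge_def by blast

theorem mainTheorem8:
  fixes G :: "('a, 'b) monoid_scheme"
  assumes "group G" and "finite (carrier G)"
    and "strictly_pseudo_solvable G"
    and "compl_prime_graph_edge G 3 5"
  shows "\<forall>Ns. chief_series G Ns \<longrightarrow>
           (\<exists>!i. Suc i < length Ns \<and> \<not> solvable (series_factor G Ns i)) \<and>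
           (\<forall>i. Suc i < length Ns \<and> \<not> solvable (series_factor G Ns i) \<longrightarrow>
                series_factor G Ns i \<cong> alt_group 5)"
proof (intro allI impI)
  fix Ns assume cs: "chief_series G Ns"
  interpret group G by fact
  have ps: "pseudo_solvable G" and ns: "\<not> solvable G"
    using assms(3) unfolding strictly_pseudo_solvable_def by auto
  have no15: "ord y \<noteq> 15" if "y \<in> carrier G" for y
    using compl_prime_graph_edge_imp_ord_neq[OF assms(4) that] by simp
  note A5 = chief_series_nonsolvable_factor[OF assms(2) ps no15 cs]
  note two = chief_series_two_nonsolvable_factors[OF assms(2) ps no15 cs]
  have "\<exists>i. Suc i < length Ns \<and> \<not> solvable (series_factor G Ns i)"
    using chief_series_solvable[OF cs] ns by blast
  moreover have "i = j" if "Suc i < length Ns" "\<not> solvable (series_factor G Ns i)"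
    and "Suc j < length Ns" "\<not> solvable (series_factor G Ns j)" for i j
    using two[of i j] two[of j i] that by (cases i j rule: linorder_cases) auto
  ultimately show "(\<exists>!i. Suc i < length Ns \<and> \<not> solvable (series_factor G Ns i)) \<and>
      (\<forall>i. Suc i < length Ns \<and> \<not> solvable (series_factor G Ns i) \<longrightarrow> series_factor G Ns i \<cong> alt_group 5)"
    using A5(1) by blast
qed

end
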